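(* Let $R$ be a ring and let $A=\sigma(R)\langle x_1,\dots,x_n\rangle$ be a bijective skew PBW extension of $R$ with associated families $\Sigma,\Delta$. If $R$ is a right (resp. left) p.q.-Baer ring and $R$ is $(\Sigma,\Delta)$-compatible, then $A$ has Property $(a.c.)$ on the right (resp. left).
   Context: All rings are associative with identity. For $S\subseteq T$ (a ring $T$), $r_T(S)=\{a\in T: Sa=0\}$ and $\ell_T(S)=\{a\in T: aS=0\}$. A ring $A$ is a skew PBW extension of $R$, written $A=\sigma(R)\langle x_1,\dots,x_n\rangle$, if: (i) $R$ is a subring of $A$ with the same identity; (ii) there are elements $x_1,\dots,x_n\in A$ such that $A$ is a free left $R$-module with basis the standard monomials $x^\alpha=x_1^{\alpha_1}\cdots x_n^{\alpha_n}$, $\alpha\in\mathbb N^n$ (with $x^0=1$); (iii) for each $i$ and each nonzero $r\in R$ there is nonzero $c_{i,r}\in R$ with $x_ir-c_{i,r}x_i\in R$; (iv) for all $i,j$ there is nonzero $d_{i,j}\in R$ with $x_jx_i-d_{i,j}x_ix_j\in R+Rx_1+\cdots+Rx_n$. For such $A$ there are injective endomorphisms $\sigma_i$ of $R$ and $\sigma_i$-derivations $\delta_i$ of $R$ with $x_ir=\sigma_i(r)x_i+\delta_i(r)$ for all $r\in R$; $\Sigma=\{\sigma_1,\dots,\sigma_n\}$, $\Delta=\{\delta_1,\dots,\delta_n\}$. For $\alpha\in\mathbb N^n$, $\sigma^\alpha=\sigma_1^{\alpha_1}\circ\cdots\circ\sigma_n^{\alpha_n}$ and $\delta^\alpha=\delta_1^{\alpha_1}\circ\cdots\circ\delta_n^{\alpha_n}$.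 The extension is bijective if each $\sigma_i$ is bijective and each $d_{i,j}$ ($1\le i<j\le n$) is invertible. $R$ is $\Sigma$-compatible if for all $a,b\in R$ and $\alpha\in\mathbb N^n$: $a\sigma^\alpha(b)=0$ iff $ab=0$; $R$ is $\Delta$-compatible if for all $a,b\in R$ and $\beta\in\mathbb N^n$: $ab=0$ implies $a\delta^\beta(b)=0$; $(\Sigma,\Delta)$-compatible means both. $R$ is right p.q.-Baer if for every $a\in R$ there is an idempotent $e$ with $r_R(aR)=eR$; left p.q.-Baer if for every $a\in R$ there is an idempotent $e$ with $\ell_R(Ra)=Re$. A ring $T$ has Property $(a.c.)$ on the right if for every finitely generated right ideal $I$ of $T$ there is $c\in T$ with $r_T(I)=r_T(cT)$; on the left if for every finitely generated left ideal $I$ there is $c\in T$ with $\ell_T(I)=\ell_T(Tc)$. *)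

theory Defs
  imports Main
begin

text \<open>All rings are of class ring_1 (associative, with identity, not necessarily
commutative). The ring A is the whole type; R is a subset of it.\<close>

definition subring :: "'a::ring_1 set \<Rightarrow> bool" where
  "subring R \<longleftrightarrow> 0 \<in> R \<and> 1 \<in> R \<and>
     (\<forall>a\<in>R. \<forall>b\<in>R. a + b \<in> R \<and> a - b \<in> R \<and> a * b \<in> R)"

text \<open>Standard monomial x^alpha = x_1^alpha_1 ... x_n^alpha_n (indices shifted to 0..n-1).\<close>
definition std_monomial :: "(nat \<Rightarrow> 'a::ring_1) \<Rightarrow> nat \<Rightarrow> (nat \<Rightarrow> nat) \<Rightarrow> 'a" where
  "std_monomial x n \<alpha> = foldr (\<lambda>i acc. x i ^ \<alpha> i * acc) [0..<n] 1"

definition expvec :: "nat \<Rightarrow> (nat \<Rightarrow> nat) \<Rightarrow> bool" where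
  "expvec n \<alpha> \<longleftrightarrow> (\<forall>i\<ge>n. \<alpha> i = 0)"

definition coeff_family :: "'a::ring_1 set \<Rightarrow> nat \<Rightarrow> ((nat \<Rightarrow> nat) \<Rightarrow> 'a) \<Rightarrow> bool" where
  "coeff_family R n c \<longleftrightarrow> finite {\<alpha>. c \<alpha> \<noteq> 0} \<and> (\<forall>\<alpha>. c \<alpha> \<in> R) \<and>
     (\<forall>\<alpha>. c \<alpha> \<noteq> 0 \<longrightarrow> expvec n \<alpha>)"

definition lin_comb :: "(nat \<Rightarrow> 'a::ring_1) \<Rightarrow> nat \<Rightarrow> ((nat \<Rightarrow> nat) \<Rightarrow> 'a) \<Rightarrow> 'a" where
  "lin_comb x n c = (\<Sum>\<alpha>\<in>{\<alpha>. c \<alpha> \<noteq> 0}. c \<alpha> * std_monomial x n \<alpha>)"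

definition free_std_basis :: "'a::ring_1 set \<Rightarrow> (nat \<Rightarrow> 'a) \<Rightarrow> nat \<Rightarrow> bool" where
  "free_std_basis R x n \<longleftrightarrow>
     (\<forall>a::'a. \<exists>c. coeff_family R n c \<and> a = lin_comb x n c) \<and>
     (\<forall>c. coeff_family R n c \<and> lin_comb x n c = 0 \<longrightarrow> (\<forall>\<alpha>. c \<alpha> = 0)) \<and>
     inj_on (std_monomial x n) {\<alpha>. expvec n \<alpha>}"

definition lin_span1 :: "'a::ring_1 set \<Rightarrow> (nat \<Rightarrow> 'a) \<Rightarrow> nat \<Rightarrow> 'a set" where
  "lin_span1 R x n = {r0 + (\<Sum>k<n. r k * x k) | r0 r. r0 \<in> R \<and> (\<forall>k<n. r k \<in> R)}"

definition skew_PBW :: "'a::ring_1 set \<Rightarrow> (nat \<Rightarrow> 'a) \<Rightarrow> nat \<Rightarrow> bool" where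
  "skew_PBW R x n \<longleftrightarrow>
     subring R \<and>
     free_std_basis R x n \<and>
     (\<forall>i<n. \<forall>r\<in>R. r \<noteq> 0 \<longrightarrow> (\<exists>c\<in>R. c \<noteq> 0 \<and> x i * r - c * x i \<in> R)) \<and>
     (\<forall>i<n. \<forall>j<n. \<exists>d\<in>R. d \<noteq> 0 \<and> x j * x i - d * (x i * x j) \<in> lin_span1 R x n)"

definition unit_in :: "'a::ring_1 set \<Rightarrow> 'a \<Rightarrow> bool" where
  "unit_in R d \<longleftrightarrow> d \<in> R \<and> (\<exists>e\<in>R. d * e = 1 \<and> e * d = 1)"

definition assoc_families ::
  "'a::ring_1 set \<Rightarrow> (nat \<Rightarrow> 'a) \<Rightarrow> nat \<Rightarrow> (nat \<Rightarrow> 'a \<Rightarrow> 'a) \<Rightarrow> (nat \<Rightarrow> 'a \<Rightarrow> 'a) \<Rightarrow> bool" where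
  "assoc_families R x n \<sigma> \<delta> \<longleftrightarrow>
     (\<forall>i<n. \<forall>r\<in>R. \<sigma> i r \<in> R \<and> \<delta> i r \<in> R \<and> x i * r = \<sigma> i r * x i + \<delta> i r)"

definition bijective_skew_PBW ::
  "'a::ring_1 set \<Rightarrow> (nat \<Rightarrow> 'a) \<Rightarrow> nat \<Rightarrow> (nat \<Rightarrow> 'a \<Rightarrow> 'a) \<Rightarrow> bool" where
  "bijective_skew_PBW R x n \<sigma> \<longleftrightarrow>
     skew_PBW R x n \<and>
     (\<forall>i<n. bij_betw (\<sigma> i) R R) \<and>
     (\<forall>i j. i < j \<and> j < n \<longrightarrow>
        (\<exists>d. unit_in R d \<and> x j * x i - d * (x i * x j) \<in> lin_span1 R x n))"

definition fam_pow :: "nat \<Rightarrow> (nat \<Rightarrow> 'a \<Rightarrow> 'a) \<Rightarrow> (nat \<Rightarrow> nat) \<Rightarrow> 'a \<Rightarrow> 'a" where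
  "fam_pow n f \<alpha> = foldr (\<lambda>i g. (f i ^^ \<alpha> i) \<circ> g) [0..<n] id"

definition Sigma_compatible :: "'a::ring_1 set \<Rightarrow> nat \<Rightarrow> (nat \<Rightarrow> 'a \<Rightarrow> 'a) \<Rightarrow> bool" where
  "Sigma_compatible R n \<sigma> \<longleftrightarrow>
     (\<forall>a\<in>R. \<forall>b\<in>R. \<forall>\<alpha>. expvec n \<alpha> \<longrightarrow> (a * fam_pow n \<sigma> \<alpha> b = 0 \<longleftrightarrow> a * b = 0))"

definition Delta_compatible :: "'a::ring_1 set \<Rightarrow> nat \<Rightarrow> (nat \<Rightarrow> 'a \<Rightarrow> 'a) \<Rightarrow> bool" where
  "Delta_compatible R n \<delta> \<longleftrightarrow>
     (\<forall>a\<in>R. \<forall>b\<in>R. \<forall>\<beta>. expvec n \<beta> \<longrightarrow> a * b = 0 \<longrightarrow> a * fam_pow n \<delta> \<beta> b = 0)"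

definition r_ann :: "'a::ring_1 set \<Rightarrow> 'a set \<Rightarrow> 'a set" where
  "r_ann T S = {a \<in> T. \<forall>s\<in>S. s * a = 0}"

definition l_ann :: "'a::ring_1 set \<Rightarrow> 'a set \<Rightarrow> 'a set" where
  "l_ann T S = {a \<in> T. \<forall>s\<in>S. a * s = 0}"

definition right_pq_Baer :: "'a::ring_1 set \<Rightarrow> bool" where
  "right_pq_Baer R \<longleftrightarrow> (\<forall>a\<in>R. \<exists>e\<in>R. e * e = e \<and>
      r_ann R ((\<lambda>t. a * t) ` R) = (\<lambda>t. e * t) ` R)"

definition left_pq_Baer :: "'a::ring_1 set \<Rightarrow> bool" where
  "left_pq_Baer R \<longleftrightarrow> (\<forall>a\<in>R. \<exists>e\<in>R. e * e = e \<and>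
      l_ann R ((\<lambda>t. t * a) ` R) = (\<lambda>t. t * e) ` R)"

definition fg_right_ideal :: "'a::ring_1 set \<Rightarrow> bool" where
  "fg_right_ideal I \<longleftrightarrow> (\<exists>(m::nat) g. I = {y. \<exists>t. y = (\<Sum>k<m. g k * t k)})"

definition fg_left_ideal :: "'a::ring_1 set \<Rightarrow> bool" where
  "fg_left_ideal I \<longleftrightarrow> (\<exists>(m::nat) g. I = {y. \<exists>t. y = (\<Sum>k<m. t k * g k)})"

definition ac_right :: "'a::ring_1 itself \<Rightarrow> bool" where
  "ac_right T \<longleftrightarrow> (\<forall>I::'a set. fg_right_ideal I \<longrightarrow>
      (\<exists>c. r_ann UNIV I = r_ann UNIV (range (\<lambda>t. c * t))))"

definition ac_left :: "'a::ring_1 itself \<Rightarrow> bool" where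
  "ac_left T \<longleftrightarrow> (\<forall>I::'a set. fg_left_ideal I \<longrightarrow>
      (\<exists>c. l_ann UNIV I = l_ann UNIV (range (\<lambda>t. t * c))))"

end

theory Submission
  imports Defs "HOL-Library.Fun_Lexorder" "HOL-Library.Function_Algebras"
begin

text \<open>
  The heart of the proof is that annihilation in \<open>A\<close> can be read off the coefficients:
  \<open>f A h = 0\<close> holds iff \<open>f\<^sub>\<alpha> R h\<^sub>\<beta> = 0\<close> for all coefficients \<open>f\<^sub>\<alpha>\<close> of \<open>f\<close> and \<open>h\<^sub>\<beta>\<close> of \<open>h\<close>.
  If the coefficients annihilate, then by \<open>(\<Sigma>,\<Delta>)\<close>-compatibility the right annihilator of the
  \<open>f\<^sub>\<alpha> R\<close> in \<open>R\<close> is stable under all \<open>\<sigma>\<^sub>i\<close> and \<open>\<delta>\<^sub>i\<close>, so the elements of \<open>A\<close> with all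
  coefficients in it form a left ideal of \<open>A\<close>, which every \<open>f\<^sub>\<alpha>\<close> kills. Conversely, let \<open>p\<close> and
  \<open>q\<close> be the deg-lex leading exponents of \<open>f\<close> and \<open>h\<close>. The coefficient of \<open>f r h\<close> at \<open>p + q\<close> is
  \<open>f\<^sub>p w\<close>, where \<open>w\<close> is built from \<open>\<sigma>\<close>-images of \<open>r h\<^sub>q\<close> and units (the \<open>d\<^sub>i\<^sub>j\<close> being
  invertible), so compatibility yields \<open>f\<^sub>p R h\<^sub>q = 0\<close>. The p.q.-Baer idempotent separating \<open>f\<^sub>p\<close>
  from \<open>h\<^sub>q\<close> then splits \<open>f\<close> or \<open>h\<close> into pieces with fewer nonzero coefficients, and induction
  applies.

  Consequently the right annihilator of a finitely generated right ideal \<open>g\<^sub>1 A + \<dots> + g\<^sub>m A\<close>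
  equals that of \<open>c A\<close> for any \<open>c \<in> R\<close> with \<open>r\<^sub>R(c R) = \<Inter>\<^sub>a r\<^sub>R(a R)\<close>, the intersection
  running over the finitely many coefficients \<open>a\<close> of the \<open>g\<^sub>k\<close>; such a \<open>c\<close> exists because \<open>R\<close>
  is right p.q.-Baer. The left case is symmetric.
\<close>

section \<open>Units and semicentral idempotents of subrings\<close>

lemma
  assumes "subring R"
  shows subring_zero: "0 \<in> R" and subring_one: "1 \<in> R"
    and subring_add: "a \<in> R \<Longrightarrow> b \<in> R \<Longrightarrow> a + b \<in> R"
    and subring_diff: "a \<in> R \<Longrightarrow> b \<in> R \<Longrightarrow> a - b \<in> R"
    and subring_mult: "a \<in> R \<Longrightarrow> b \<in> R \<Longrightarrow> a * b \<in> R"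
  using assms unfolding subring_def by auto

lemma unit_in_R: "unit_in R u \<Longrightarrow> u \<in> R"
  unfolding unit_in_def by blast

lemma unit_in_cancel: "unit_in R u \<Longrightarrow> a * u = 0 \<Longrightarrow> a = 0"
  unfolding unit_in_def by (metis mult.assoc mult_1_right mult_zero_left)

lemma unit_in_one: "subring R \<Longrightarrow> unit_in R 1"
  unfolding unit_in_def using subring_one by auto

lemma unit_in_mult:
  assumes "subring R" "unit_in R u" "unit_in R v"
  shows "unit_in R (u * v)"
proof -
  obtain u' v' where "u \<in> R" "v \<in> R" "u' \<in> R" "v' \<in> R" "u * u' = 1" "u' * u = 1" "v * v' = 1" "v' * v = 1"
    using assms(2,3) unfolding unit_in_def by blast
  moreover from this have "u * v * (v' * u') = 1" "v' * u' * (u * v) = 1"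
    by (simp_all add: mult.assoc) (simp_all add: mult.assoc[symmetric])
  ultimately show ?thesis using subring_mult[OF assms(1)] unfolding unit_in_def by blast
qed

definition left_semicentral :: "'a::ring_1 set \<Rightarrow> 'a \<Rightarrow> bool" where
  "left_semicentral S e \<longleftrightarrow> e \<in> S \<and> e * e = e \<and> (\<forall>r\<in>S. r * e = e * r * e)"

definition right_semicentral :: "'a::ring_1 set \<Rightarrow> 'a \<Rightarrow> bool" where
  "right_semicentral S e \<longleftrightarrow> e \<in> S \<and> e * e = e \<and> (\<forall>r\<in>S. e * r = e * r * e)"

lemma right_pq_Baer_left_semicentral:
  assumes "subring R" "right_pq_Baer R" "a \<in> R"
  obtains e where "left_semicentral R e" "\<And>b. b \<in> R \<Longrightarrow> (\<forall>r\<in>R. a * r * b = 0) \<longleftrightarrow> e * b = b"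
proof -
  obtain e where e: "e \<in> R" "e * e = e" and ann: "r_ann R ((\<lambda>t. a * t) ` R) = (\<lambda>t. e * t) ` R"
    using assms(2,3) unfolding right_pq_Baer_def by blast
  have ann_iff: "(\<forall>r\<in>R. a * r * b = 0) \<longleftrightarrow> e * b = b" if "b \<in> R" for b
  proof -
    have "(\<forall>r\<in>R. a * r * b = 0) \<longleftrightarrow> b \<in> (\<lambda>t. e * t) ` R"
      using that unfolding ann[symmetric] r_ann_def by (auto simp: mult.assoc)
    also have "\<dots> \<longleftrightarrow> e * b = b"
    proof
      assume "b \<in> (\<lambda>t. e * t) ` R"
      then show "e * b = b" using e(2) by (auto simp: mult.assoc[symmetric])
    next
      assume "e * b = b"
      then show "b \<in> (\<lambda>t. e * t) ` R" using rev_image_eqI[OF that] by metis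
    qed
    finally show ?thesis .
  qed
  have "r * e = e * r * e" if "r \<in> R" for r
  proof -
    have "\<forall>s\<in>R. a * s * e = 0" using ann_iff[OF e(1)] e(2) by blast
    then have "\<forall>s\<in>R. a * s * (r * e) = 0"
      using that subring_mult[OF assms(1)] by (metis mult.assoc)
    then show ?thesis using ann_iff subring_mult[OF assms(1) that e(1)] by (simp add: mult.assoc)
  qed
  then show thesis using that e ann_iff unfolding left_semicentral_def by blast
qed

lemma left_pq_Baer_right_semicentral:
  assumes "subring R" "left_pq_Baer R" "a \<in> R"
  obtains e where "right_semicentral R e" "\<And>b. b \<in> R \<Longrightarrow> (\<forall>r\<in>R. b * r * a = 0) \<longleftrightarrow> b * e = b"
proof -
  obtain e where e: "e \<in> R" "e * e = e" and ann: "l_ann R ((\<lambda>t. t * a) ` R) = (\<lambda>t. t * e) ` R"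
    using assms(2,3) unfolding left_pq_Baer_def by blast
  have ann_iff: "(\<forall>r\<in>R. b * r * a = 0) \<longleftrightarrow> b * e = b" if "b \<in> R" for b
  proof -
    have "(\<forall>r\<in>R. b * r * a = 0) \<longleftrightarrow> b \<in> (\<lambda>t. t * e) ` R"
      using that unfolding ann[symmetric] l_ann_def by (auto simp: mult.assoc)
    also have "\<dots> \<longleftrightarrow> b * e = b"
    proof
      assume "b \<in> (\<lambda>t. t * e) ` R"
      then show "b * e = b" using e(2) by (auto simp: mult.assoc)
    next
      assume "b * e = b"
      then show "b \<in> (\<lambda>t. t * e) ` R" using rev_image_eqI[OF that] by metis
    qed
    finally show ?thesis .
  qed
  have "e * r = e * r * e" if "r \<in> R" for r
  proof -
    have "\<forall>s\<in>R. e * s * a = 0" using ann_iff[OF e(1)] e(2) by blast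
    then have "\<forall>s\<in>R. e * r * s * a = 0"
      using that subring_mult[OF assms(1)] by (metis mult.assoc)
    then show ?thesis using ann_iff subring_mult[OF assms(1) e(1) that] by simp
  qed
  then show thesis using that e ann_iff unfolding right_semicentral_def by blast
qed

lemma right_pq_Baer_annihilator_split:
  assumes "subring R" "right_pq_Baer R" "a \<in> R" "b \<in> R" "\<forall>r\<in>R. a * r * b = 0"
  shows "\<exists>e. left_semicentral R e \<and> a * e = 0 \<and> e * b = b"
proof -
  obtain e where e: "left_semicentral R e" "\<And>c. c \<in> R \<Longrightarrow> (\<forall>r\<in>R. a * r * c = 0) \<longleftrightarrow> e * c = c"
    using right_pq_Baer_left_semicentral[OF assms(1-3)] by blast
  have "e \<in> R" "e * e = e" using e(1) unfolding left_semicentral_def by auto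
  then have "a * 1 * e = 0" using e(2) subring_one[OF assms(1)] by blast
  then show ?thesis using e assms(4,5) by auto
qed

lemma left_pq_Baer_annihilator_split:
  assumes "subring R" "left_pq_Baer R" "a \<in> R" "b \<in> R" "\<forall>r\<in>R. a * r * b = 0"
  shows "\<exists>e. right_semicentral R e \<and> a * e = a \<and> e * b = 0"
proof -
  obtain e where e: "right_semicentral R e" "\<And>c. c \<in> R \<Longrightarrow> (\<forall>r\<in>R. c * r * b = 0) \<longleftrightarrow> c * e = c"
    using left_pq_Baer_right_semicentral[OF assms(1,2,4)] by blast
  have "e \<in> R" "e * e = e" using e(1) unfolding right_semicentral_def by auto
  then have "e * 1 * b = 0" using e(2) subring_one[OF assms(1)] by blast
  then show ?thesis using e assms(3,5) by auto
qed

lemma left_semicentral_mult: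
  assumes "subring R" "left_semicentral R e" "left_semicentral R g"
  shows "left_semicentral R (e * g)" and "e * g * b = b \<longleftrightarrow> e * b = b \<and> g * b = b"
proof -
  have e: "e \<in> R" "e * e = e" "\<And>r. r \<in> R \<Longrightarrow> r * e = e * r * e"
    and g: "g \<in> R" "g * g = g" "\<And>r. r \<in> R \<Longrightarrow> r * g = g * r * g"
    using assms(2,3) unfolding left_semicentral_def by auto
  have eg: "e * g = g * e * g" using g(3)[OF e(1)] .
  have "e * g * (e * g) = e * (g * e * g)" by (simp add: mult.assoc)
  also have "\<dots> = e * (e * g)" by (simp only: eg[symmetric])
  finally have "e * g * (e * g) = e * g" using e(2) by (simp add: mult.assoc[symmetric])
  moreover have "r * (e * g) = e * g * r * (e * g)" if "r \<in> R" for r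
  proof -
    have "r * (e * g) = (r * e) * g" by (simp add: mult.assoc)
    also have "\<dots> = (e * r * e) * g" using e(3)[OF that] by simp
    also have "\<dots> = e * (r * e * g)" by (simp add: mult.assoc)
    also have "\<dots> = e * (g * (r * e) * g)" using g(3)[OF subring_mult[OF assms(1) that e(1)]] by simp
    also have "\<dots> = e * g * r * (e * g)" by (simp add: mult.assoc)
    finally show ?thesis .
  qed
  ultimately show "left_semicentral R (e * g)"
    using subring_mult[OF assms(1) e(1) g(1)] unfolding left_semicentral_def by blast
  show "e * g * b = b \<longleftrightarrow> e * b = b \<and> g * b = b"
  proof
    assume egb: "e * g * b = b"
    have "e * b = e * e * g * b" using egb by (simp add: mult.assoc)
    also have "\<dots> = b" using e(2) egb by simp
    finally have "e * b = b" .
    moreover have "g * b = b"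
    proof -
      have "g * b = g * e * g * b" using egb by (simp add: mult.assoc)
      then show ?thesis using eg egb by simp
    qed
    ultimately show "e * b = b \<and> g * b = b" by simp
  qed (simp add: mult.assoc)
qed

lemma right_semicentral_mult:
  assumes "subring R" "right_semicentral R e" "right_semicentral R g"
  shows "right_semicentral R (g * e)" and "b * (g * e) = b \<longleftrightarrow> b * e = b \<and> b * g = b"
proof -
  have e: "e \<in> R" "e * e = e" "\<And>r. r \<in> R \<Longrightarrow> e * r = e * r * e"
    and g: "g \<in> R" "g * g = g" "\<And>r. r \<in> R \<Longrightarrow> g * r = g * r * g"
    using assms(2,3) unfolding right_semicentral_def by auto
  have ge: "g * e = g * e * g" using g(3)[OF e(1)] .
  have "g * e * (g * e) = g * e * g * e" by (simp add: mult.assoc)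
  also have "\<dots> = g * e * e" by (simp only: ge[symmetric])
  finally have "g * e * (g * e) = g * e" using e(2) by (simp add: mult.assoc)
  moreover have "g * e * r = g * e * r * (g * e)" if "r \<in> R" for r
  proof -
    have "g * e * r = g * (e * r)" by (simp add: mult.assoc)
    also have "\<dots> = g * (e * r * e)" using arg_cong[where f="\<lambda>z. g * z", OF e(3)[OF that]] .
    also have "\<dots> = g * (e * r) * e" by (simp add: mult.assoc)
    also have "\<dots> = g * (e * r) * g * e"
      using arg_cong[where f="\<lambda>z. z * e", OF g(3)[OF subring_mult[OF assms(1) e(1) that]]] .
    also have "\<dots> = g * e * r * (g * e)" by (simp add: mult.assoc)
    finally show ?thesis .
  qed
  ultimately show "right_semicentral R (g * e)"
    using subring_mult[OF assms(1) g(1) e(1)] unfolding right_semicentral_def by blast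
  show "b * (g * e) = b \<longleftrightarrow> b * e = b \<and> b * g = b"
  proof
    assume bge: "b * (g * e) = b"
    have "b * e = b * (g * e) * e" using bge by simp
    also have "\<dots> = b * (g * (e * e))" by (simp add: mult.assoc)
    also have "\<dots> = b" using e(2) bge by simp
    finally have "b * e = b" .
    moreover have "b * g = b"
    proof -
      have "b * g = b * (g * e) * g" using bge by simp
      also have "\<dots> = b * (g * e * g)" by (simp add: mult.assoc)
      finally show ?thesis using ge bge by simp
    qed
    ultimately show "b * e = b \<and> b * g = b" by simp
  qed (simp add: mult.assoc[symmetric])
qed

lemma left_semicentral_complement_annihilator:
  assumes "subring R" "left_semicentral R g"
  shows "(\<forall>r\<in>R. (1 - g) * r * b = 0) \<longleftrightarrow> g * b = b"
proof
  assume "\<forall>r\<in>R. (1 - g) * r * b = 0"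
  then have "(1 - g) * 1 * b = 0" using subring_one[OF assms(1)] by blast
  then show "g * b = b" by (simp add: algebra_simps)
next
  assume gb: "g * b = b"
  have g: "g * g = g" "\<And>r. r \<in> R \<Longrightarrow> r * g = g * r * g"
    using assms(2) unfolding left_semicentral_def by auto
  have "(1 - g) * r * b = 0" if "r \<in> R" for r
  proof -
    have "(1 - g) * r * b = (1 - g) * (r * g) * b" using gb by (simp add: mult.assoc)
    also have "\<dots> = (1 - g) * (g * r * g) * b" by (metis g(2)[OF that])
    also have "\<dots> = ((1 - g) * g) * (r * g * b)" by (simp add: mult.assoc)
    also have "(1 - g) * g = 0" using g(1) by (simp add: algebra_simps)
    finally show ?thesis by simp
  qed
  then show "\<forall>r\<in>R. (1 - g) * r * b = 0" by blast
qed

lemma right_semicentral_complement_annihilator: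
  assumes "subring R" "right_semicentral R g"
  shows "(\<forall>r\<in>R. b * r * (1 - g) = 0) \<longleftrightarrow> b * g = b"
proof
  assume "\<forall>r\<in>R. b * r * (1 - g) = 0"
  then have "b * 1 * (1 - g) = 0" using subring_one[OF assms(1)] by blast
  then show "b * g = b" by (simp add: algebra_simps)
next
  assume bg: "b * g = b"
  have g: "g * g = g" "\<And>r. r \<in> R \<Longrightarrow> g * r = g * r * g"
    using assms(2) unfolding right_semicentral_def by auto
  have "b * r * (1 - g) = 0" if "r \<in> R" for r
  proof -
    have "b * r * (1 - g) = b * g * r * (1 - g)" using bg by simp
    also have "\<dots> = b * (g * r) * (1 - g)" by (simp add: mult.assoc)
    also have "\<dots> = b * (g * r * g) * (1 - g)" by (metis g(2)[OF that])
    also have "\<dots> = (b * g * r) * (g * (1 - g))" by (simp add: mult.assoc)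
    also have "g * (1 - g) = 0" using g(1) by (simp add: algebra_simps)
    finally show ?thesis by simp
  qed
  then show "\<forall>r\<in>R. b * r * (1 - g) = 0" by blast
qed

text \<open>The right annihilators \<open>r(aR) = eR\<close>, \<open>a \<in> E\<close>, intersect to \<open>gR\<close> with \<open>g\<close> the product
  of the idempotents \<open>e\<close>, again left semicentral, and \<open>gR = r((1 - g)R)\<close>; dually on the left.\<close>

lemma right_pq_Baer_finite_annihilator:
  assumes "subring R" "right_pq_Baer R" "finite E" "E \<subseteq> R"
  obtains c where "c \<in> R"
    "\<And>b. b \<in> R \<Longrightarrow> (\<forall>r\<in>R. c * r * b = 0) \<longleftrightarrow> (\<forall>a\<in>E. \<forall>r\<in>R. a * r * b = 0)"
proof -
  have "\<exists>g. left_semicentral R g \<and> (\<forall>b\<in>R. (\<forall>a\<in>E. \<forall>r\<in>R. a * r * b = 0) \<longleftrightarrow> g * b = b)"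
    using assms(3,4)
  proof (induction E rule: finite_induct)
    case empty
    have "left_semicentral R 1" using subring_one[OF assms(1)] unfolding left_semicentral_def by simp
    then show ?case by auto
  next
    case (insert a E)
    then obtain g where g: "left_semicentral R g" "\<forall>b\<in>R. (\<forall>a\<in>E. \<forall>r\<in>R. a * r * b = 0) \<longleftrightarrow> g * b = b"
      by auto
    obtain e where e: "left_semicentral R e" "\<And>b. b \<in> R \<Longrightarrow> (\<forall>r\<in>R. a * r * b = 0) \<longleftrightarrow> e * b = b"
      using right_pq_Baer_left_semicentral[OF assms(1,2)] insert.prems by blast
    show ?case
      using left_semicentral_mult[OF assms(1) e(1) g(1)] e(2) g(2) by auto
  qed
  then obtain g where g: "left_semicentral R g"
    and ann: "\<forall>b\<in>R. (\<forall>a\<in>E. \<forall>r\<in>R. a * r * b = 0) \<longleftrightarrow> g * b = b"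
    by blast
  have "1 - g \<in> R"
    using g subring_diff[OF assms(1) subring_one[OF assms(1)]] unfolding left_semicentral_def by blast
  then show thesis
    using that ann left_semicentral_complement_annihilator[OF assms(1) g] by simp
qed

lemma left_pq_Baer_finite_annihilator:
  assumes "subring R" "left_pq_Baer R" "finite E" "E \<subseteq> R"
  obtains c where "c \<in> R"
    "\<And>b. b \<in> R \<Longrightarrow> (\<forall>r\<in>R. b * r * c = 0) \<longleftrightarrow> (\<forall>a\<in>E. \<forall>r\<in>R. b * r * a = 0)"
proof -
  have "\<exists>g. right_semicentral R g \<and> (\<forall>b\<in>R. (\<forall>a\<in>E. \<forall>r\<in>R. b * r * a = 0) \<longleftrightarrow> b * g = b)"
    using assms(3,4)
  proof (induction E rule: finite_induct)
    case empty
    have "right_semicentral R 1" using subring_one[OF assms(1)] unfolding right_semicentral_def by simp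
    then show ?case by auto
  next
    case (insert a E)
    then obtain g where g: "right_semicentral R g" "\<forall>b\<in>R. (\<forall>a\<in>E. \<forall>r\<in>R. b * r * a = 0) \<longleftrightarrow> b * g = b"
      by auto
    obtain e where e: "right_semicentral R e" "\<And>b. b \<in> R \<Longrightarrow> (\<forall>r\<in>R. b * r * a = 0) \<longleftrightarrow> b * e = b"
      using left_pq_Baer_right_semicentral[OF assms(1,2)] insert.prems by blast
    show ?case
      using right_semicentral_mult[OF assms(1) e(1) g(1)] e(2) g(2) by auto
  qed
  then obtain g where g: "right_semicentral R g"
    and ann: "\<forall>b\<in>R. (\<forall>a\<in>E. \<forall>r\<in>R. b * r * a = 0) \<longleftrightarrow> b * g = b"
    by blast
  have "1 - g \<in> R"
    using g subring_diff[OF assms(1) subring_one[OF assms(1)]] unfolding right_semicentral_def by blast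
  then show thesis
    using that ann right_semicentral_complement_annihilator[OF assms(1) g] by simp
qed

section \<open>Exponent vectors and the degree-lexicographic order\<close>

definition unit_vec :: "nat \<Rightarrow> nat \<Rightarrow> nat" where
  "unit_vec i = (\<lambda>k. if k = i then 1 else 0)"

definition degn :: "nat \<Rightarrow> (nat \<Rightarrow> nat) \<Rightarrow> nat" where
  "degn n \<alpha> = (\<Sum>k<n. \<alpha> k)"

lemma expvec_zero: "expvec n 0"
  unfolding expvec_def by simp

lemma expvec_add: "expvec n \<alpha> \<Longrightarrow> expvec n \<beta> \<Longrightarrow> expvec n (\<alpha> + \<beta>)"
  unfolding expvec_def by simp

lemma expvec_unit_vec: "i < n \<Longrightarrow> expvec n (unit_vec i)"
  unfolding expvec_def unit_vec_def by simp

lemma degn_add: "degn n (\<alpha> + \<beta>) = degn n \<alpha> + degn n \<beta>"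
  unfolding degn_def by (simp add: sum.distrib)

lemma degn_unit_vec: "i < n \<Longrightarrow> degn n (unit_vec i) = 1"
  unfolding degn_def unit_vec_def by simp

lemma expvec_split_first:
  assumes "expvec n \<gamma>" "\<gamma> \<noteq> 0"
  obtains j \<gamma>' where "j < n" "\<gamma> = \<gamma>' + unit_vec j" "expvec n \<gamma>'"
    "\<And>k. k < j \<Longrightarrow> \<gamma> k = 0" "\<And>k. k < j \<Longrightarrow> \<gamma>' k = 0"
proof -
  define j where "j = (LEAST k. \<gamma> k \<noteq> 0)"
  have "\<exists>k. \<gamma> k \<noteq> 0" using assms(2) by auto
  then have "\<gamma> j \<noteq> 0" unfolding j_def by (rule LeastI_ex)
  moreover have below: "\<gamma> k = 0" if "k < j" for k using that not_less_Least unfolding j_def by blast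
  moreover have "j < n" using assms(1) \<open>\<gamma> j \<noteq> 0\<close> unfolding expvec_def by (meson not_less)
  moreover have "\<gamma> = \<gamma>(j := \<gamma> j - 1) + unit_vec j"
    using \<open>\<gamma> j \<noteq> 0\<close> by (auto simp: unit_vec_def fun_eq_iff)
  ultimately show thesis
    using that[of j "\<gamma>(j := \<gamma> j - 1)"] assms(1) unfolding expvec_def by auto
qed

lemma expvec_induct [consumes 1, case_names zero add_unit_vec]:
  assumes "expvec n \<alpha>" "P 0"
    and step: "\<And>\<alpha> j. expvec n \<alpha> \<Longrightarrow> j < n \<Longrightarrow> (\<And>k. k < j \<Longrightarrow> \<alpha> k = 0) \<Longrightarrow> P \<alpha> \<Longrightarrow>
      P (\<alpha> + unit_vec j)"
  shows "P \<alpha>"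
  using assms(1)
proof (induction "degn n \<alpha>" arbitrary: \<alpha> rule: less_induct)
  case less
  show ?case
  proof (cases "\<alpha> = 0")
    case False
    then obtain j \<alpha>' where j: "j < n" "\<alpha> = \<alpha>' + unit_vec j" "expvec n \<alpha>'" "\<And>k. k < j \<Longrightarrow> \<alpha>' k = 0"
      using expvec_split_first[OF less.prems] by metis
    have "degn n \<alpha>' < degn n \<alpha>" using j(1,2) by (simp add: degn_add degn_unit_vec)
    then show ?thesis using less.hyps j step by blast
  qed (simp add: assms(2))
qed

definition deglex_key :: "nat \<Rightarrow> (nat \<Rightarrow> nat) \<Rightarrow> nat \<Rightarrow> nat" where
  "deglex_key n \<alpha> = (\<lambda>k. case k of 0 \<Rightarrow> degn n \<alpha> | Suc k \<Rightarrow> \<alpha> k)"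

definition deglex_less :: "nat \<Rightarrow> (nat \<Rightarrow> nat) \<Rightarrow> (nat \<Rightarrow> nat) \<Rightarrow> bool" where
  "deglex_less n \<alpha> \<beta> \<longleftrightarrow> less_fun (deglex_key n \<alpha>) (deglex_key n \<beta>)"

lemma deglex_less_irrefl: "\<not> deglex_less n \<alpha> \<alpha>"
  unfolding deglex_less_def by (rule less_fun_irrefl)

lemma deglex_less_trans: "deglex_less n \<alpha> \<beta> \<Longrightarrow> deglex_less n \<beta> \<gamma> \<Longrightarrow> deglex_less n \<alpha> \<gamma>"
  unfolding deglex_less_def by (rule less_fun_trans)

lemma deglex_key_inject: "deglex_key n \<alpha> = deglex_key n \<beta> \<Longrightarrow> \<alpha> = \<beta>"
  unfolding deglex_key_def by (metis nat.case(2) ext)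

lemma deglex_less_linear:
  assumes "expvec n \<alpha>" "expvec n \<beta>" "\<alpha> \<noteq> \<beta>"
  shows "deglex_less n \<alpha> \<beta> \<or> deglex_less n \<beta> \<alpha>"
proof -
  have "k \<le> n" if "deglex_key n \<alpha> k \<noteq> deglex_key n \<beta> k" for k
  proof (cases k)
    case (Suc k')
    then have "\<alpha> k' \<noteq> \<beta> k'" using that by (simp add: deglex_key_def)
    then have "k' < n" using assms(1,2) unfolding expvec_def by (metis leI)
    then show ?thesis using Suc by simp
  qed simp
  then have "{k. deglex_key n \<alpha> k \<noteq> deglex_key n \<beta> k} \<subseteq> {..n}" by auto
  then have "finite {k. deglex_key n \<alpha> k \<noteq> deglex_key n \<beta> k}"
    by (rule finite_subset) simp
  then show ?thesis
    using less_fun_trichotomy deglex_key_inject assms(3) unfolding deglex_less_def by blast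
qed

lemma deglex_key_add: "deglex_key n (\<alpha> + \<beta>) k = deglex_key n \<alpha> k + deglex_key n \<beta> k"
  unfolding deglex_key_def by (simp add: degn_add split: nat.split)

lemma deglex_less_add_right:
  assumes "deglex_less n \<alpha> \<beta>"
  shows "deglex_less n (\<alpha> + \<gamma>) (\<beta> + \<gamma>)"
proof -
  obtain k where k: "deglex_key n \<alpha> k < deglex_key n \<beta> k"
    "\<And>k'. k' < k \<Longrightarrow> deglex_key n \<alpha> k' = deglex_key n \<beta> k'"
    using assms unfolding deglex_less_def by (rule less_funE) blast
  show ?thesis unfolding deglex_less_def
    by (rule less_funI, rule exI[of _ k]) (simp add: deglex_key_add k)
qed

lemma deglex_less_degn:
  assumes "deglex_less n \<alpha> \<beta>"
  shows "degn n \<alpha> \<le> degn n \<beta>"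
proof -
  obtain k where "deglex_key n \<alpha> k < deglex_key n \<beta> k"
    "\<And>k'. k' < k \<Longrightarrow> deglex_key n \<alpha> k' = deglex_key n \<beta> k'"
    using assms unfolding deglex_less_def by (rule less_funE) blast
  then have "deglex_key n \<alpha> 0 \<le> deglex_key n \<beta> 0" by (cases k) simp_all
  then show ?thesis by (simp add: deglex_key_def)
qed

lemma deglex_max:
  assumes "finite S" "S \<noteq> {}" "\<And>\<alpha>. \<alpha> \<in> S \<Longrightarrow> expvec n \<alpha>"
  obtains m where "m \<in> S" "\<And>\<alpha>. \<alpha> \<in> S \<Longrightarrow> \<alpha> \<noteq> m \<Longrightarrow> deglex_less n \<alpha> m"
proof -
  have "finite (deglex_key n ` S)" "deglex_key n ` S \<noteq> {}" using assms(1,2) by simp_all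
  from order.finite_has_maximal[OF order_less_fun this]
  obtain m where m: "m \<in> S" and max: "\<And>\<alpha>. \<alpha> \<in> S \<Longrightarrow> deglex_less n m \<alpha> \<Longrightarrow> False"
    unfolding deglex_less_def by (metis image_iff less_fun_irrefl)
  show thesis
  proof (rule that[OF m])
    fix \<alpha> assume "\<alpha> \<in> S" "\<alpha> \<noteq> m"
    then show "deglex_less n \<alpha> m" using deglex_less_linear[OF assms(3) assms(3)] m max by blast
  qed
qed

lemma deglex_less_add_mono:
  assumes "\<alpha> \<noteq> p \<Longrightarrow> deglex_less n \<alpha> p" "\<beta> \<noteq> q \<Longrightarrow> deglex_less n \<beta> q" "(\<alpha>, \<beta>) \<noteq> (p, q)"
  shows "deglex_less n (\<alpha> + \<beta>) (p + q)"
proof (cases "\<alpha> = p")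
  case True
  then show ?thesis
    using assms deglex_less_add_right[of n \<beta> q p] by (simp add: add.commute)
next
  case False
  then have "deglex_less n (\<alpha> + \<beta>) (p + \<beta>)" using assms(1) deglex_less_add_right by blast
  moreover have "\<beta> \<noteq> q \<Longrightarrow> deglex_less n (p + \<beta>) (p + q)"
    using assms(2) deglex_less_add_right[of n \<beta> q p] by (simp add: add.commute)
  ultimately show ?thesis using deglex_less_trans by blast
qed

lemma std_monomial_zero: "std_monomial x n 0 = 1"
proof -
  have "foldr (\<lambda>i acc. x i ^ (0::nat \<Rightarrow> nat) i * acc) ks 1 = 1" for ks :: "nat list"
    by (induction ks) simp_all
  then show ?thesis by (simp only: std_monomial_def)
qed

lemma std_monomial_add_unit_vec:
  assumes "i < n" "\<And>k. k < i \<Longrightarrow> \<gamma> k = 0"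
  shows "x i * std_monomial x n \<gamma> = std_monomial x n (\<gamma> + unit_vec i)"
proof -
  have split: "[0..<n] = [0..<i] @ i # [Suc i..<n]"
    using assms(1) by (metis le0 upt_add_eq_append upt_conv_Cons le_add_diff_inverse less_imp_le)
  have vanish: "foldr (\<lambda>k acc. x k ^ \<gamma> k * acc) [0..<i] z = z"
    if "\<And>k. k < i \<Longrightarrow> \<gamma> k = 0" for \<gamma> :: "nat \<Rightarrow> nat" and z
  proof -
    have "foldr (\<lambda>k acc. x k ^ \<gamma> k * acc) ks z = z" if "\<forall>k\<in>set ks. k < i" for ks
      using that \<open>\<And>k. k < i \<Longrightarrow> \<gamma> k = 0\<close> by (induction ks) auto
    then show ?thesis by simp
  qed
  have tail: "foldr (\<lambda>k acc. x k ^ (\<gamma> + unit_vec i) k * acc) [Suc i..<n] 1 =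
      foldr (\<lambda>k acc. x k ^ \<gamma> k * acc) [Suc i..<n] 1"
    by (rule foldr_cong) (auto simp: unit_vec_def)
  show ?thesis
    unfolding std_monomial_def split foldr_append
    using vanish[of \<gamma>] vanish[of "\<gamma> + unit_vec i"] assms(2) tail
    by (simp add: unit_vec_def mult.assoc)
qed

lemma std_monomial_unit_vec:
  assumes "i < n"
  shows "std_monomial x n (unit_vec i) = x i"
proof -
  have "x i = x i * std_monomial x n 0" by (simp add: std_monomial_zero)
  also have "\<dots> = std_monomial x n (0 + unit_vec i)"
    by (rule std_monomial_add_unit_vec[OF assms]) simp
  finally show ?thesis by simp
qed

lemma std_monomial_commute:
  assumes "\<And>i. i < n \<Longrightarrow> x i * e = e * x i"
  shows "std_monomial x n \<gamma> * e = e * std_monomial x n \<gamma>"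
proof -
  have "foldr (\<lambda>k acc. x k ^ \<gamma> k * acc) ks 1 * e = e * foldr (\<lambda>k acc. x k ^ \<gamma> k * acc) ks 1"
    if "\<forall>k\<in>set ks. k < n" for ks
    using that
  proof (induction ks)
    case (Cons k ks)
    then have "x k * e = e * x k" using assms by simp
    then have X: "x k ^ \<gamma> k * e = e * x k ^ \<gamma> k" by (rule power_commuting_commutes)
    define F where "F = foldr (\<lambda>k acc. x k ^ \<gamma> k * acc) ks 1"
    have "F * e = e * F" using Cons unfolding F_def by simp
    then have "x k ^ \<gamma> k * F * e = e * (x k ^ \<gamma> k * F)"
      using X by (metis mult.assoc)
    then show ?case unfolding F_def by simp
  qed simp
  then show ?thesis unfolding std_monomial_def by simp
qed

lemma fam_pow_unit_vec:
  assumes "i < n"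
  shows "fam_pow n f (unit_vec i) = f i"
proof -
  have "foldr (\<lambda>k g. (f k ^^ unit_vec i k) \<circ> g) ks id = (if i \<in> set ks then f i else id)"
    if "distinct ks" for ks
    using that by (induction ks) (auto simp: unit_vec_def)
  from this[of "[0..<n]"] show ?thesis using assms unfolding fam_pow_def by simp
qed

section \<open>Coordinates in a skew PBW extension\<close>

definition supp :: "((nat \<Rightarrow> nat) \<Rightarrow> 'a::zero) \<Rightarrow> (nat \<Rightarrow> nat) set" where
  "supp c = {\<alpha>. c \<alpha> \<noteq> 0}"

lemma lin_comb_eq_sum:
  assumes "finite S" "supp c \<subseteq> S"
  shows "lin_comb x n c = (\<Sum>\<alpha>\<in>S. c \<alpha> * std_monomial x n \<alpha>)"
  unfolding lin_comb_def
  by (rule sum.mono_neutral_left) (use assms in \<open>auto simp: supp_def\<close>)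

lemma card_supp_le:
  assumes "finite (supp c)" "\<And>\<alpha>. c \<alpha> = 0 \<Longrightarrow> c' \<alpha> = 0"
  shows "card (supp c') \<le> card (supp c)"
  using assms by (intro card_mono) (auto simp: supp_def)

lemma card_supp_less:
  assumes "finite (supp c)" "\<And>\<alpha>. c \<alpha> = 0 \<Longrightarrow> c' \<alpha> = 0" "c \<alpha>\<^sub>0 \<noteq> 0" "c' \<alpha>\<^sub>0 = 0"
  shows "card (supp c') < card (supp c)"
  using assms by (intro psubset_card_mono) (auto simp: supp_def)

locale compatible_skew_PBW =
  fixes R :: "'a::ring_1 set" and x :: "nat \<Rightarrow> 'a" and n :: nat
    and \<sigma> \<delta> :: "nat \<Rightarrow> 'a \<Rightarrow> 'a"
  assumes bijective: "bijective_skew_PBW R x n \<sigma>"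
    and families: "assoc_families R x n \<sigma> \<delta>"
    and Sigma_compat: "Sigma_compatible R n \<sigma>"
    and Delta_compat: "Delta_compatible R n \<delta>"
begin

abbreviation monom :: "(nat \<Rightarrow> nat) \<Rightarrow> 'a" where "monom \<equiv> std_monomial x n"
abbreviation deg :: "(nat \<Rightarrow> nat) \<Rightarrow> nat" where "deg \<equiv> degn n"

lemma subring_R: "subring R" and free_basis: "free_std_basis R x n"
  using bijective unfolding bijective_skew_PBW_def skew_PBW_def by auto

lemmas R_zero = subring_zero[OF subring_R] and R_one = subring_one[OF subring_R]
  and R_add = subring_add[OF subring_R] and R_diff = subring_diff[OF subring_R]
  and R_mult = subring_mult[OF subring_R]

definition coef :: "'a \<Rightarrow> (nat \<Rightarrow> nat) \<Rightarrow> 'a" where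
  "coef a = (THE c. coeff_family R n c \<and> a = lin_comb x n c)"

lemma coeff_family_unique:
  assumes "coeff_family R n c" "coeff_family R n c'" "lin_comb x n c = lin_comb x n c'"
  shows "c = c'"
proof -
  let ?S = "supp c \<union> supp c'" and ?d = "\<lambda>\<alpha>. c \<alpha> - c' \<alpha>"
  have fin: "finite ?S" using assms(1,2) unfolding coeff_family_def supp_def by auto
  have sub: "supp ?d \<subseteq> ?S" by (auto simp: supp_def)
  have "coeff_family R n ?d"
    unfolding coeff_family_def
  proof (intro conjI allI impI)
    show "finite {\<alpha>. c \<alpha> - c' \<alpha> \<noteq> 0}" using finite_subset[OF sub fin] unfolding supp_def .
    show "c \<alpha> - c' \<alpha> \<in> R" for \<alpha> using assms(1,2) R_diff unfolding coeff_family_def by blast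
    show "expvec n \<alpha>" if "c \<alpha> - c' \<alpha> \<noteq> 0" for \<alpha>
      using that assms(1,2) unfolding coeff_family_def by (cases "c \<alpha> = 0") auto
  qed
  moreover have "lin_comb x n ?d = 0"
    using lin_comb_eq_sum[OF fin sub] lin_comb_eq_sum[OF fin, of c] lin_comb_eq_sum[OF fin, of c'] assms(3)
    by (simp add: left_diff_distrib sum_subtractf)
  ultimately show ?thesis using free_basis unfolding free_std_basis_def by (auto simp: fun_eq_iff)
qed

lemma coef_eqI:
  assumes "coeff_family R n c" "a = lin_comb x n c"
  shows "coef a = c"
  unfolding coef_def using assms coeff_family_unique by blast

lemma coeff_family_coef: "coeff_family R n (coef a)" and lin_comb_coef: "lin_comb x n (coef a) = a"
proof -
  obtain c where "coeff_family R n c" "a = lin_comb x n c"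
    using free_basis unfolding free_std_basis_def by blast
  then show "coeff_family R n (coef a)" "lin_comb x n (coef a) = a" using coef_eqI by auto
qed

lemma coef_in_R: "coef a \<alpha> \<in> R"
  using coeff_family_coef unfolding coeff_family_def by blast

lemma finite_supp_coef: "finite (supp (coef a))"
  using coeff_family_coef unfolding coeff_family_def supp_def by blast

lemma expvec_coef: "coef a \<alpha> \<noteq> 0 \<Longrightarrow> expvec n \<alpha>"
  using coeff_family_coef unfolding coeff_family_def by blast

lemma coef_expansion: "finite S \<Longrightarrow> supp (coef a) \<subseteq> S \<Longrightarrow> a = (\<Sum>\<alpha>\<in>S. coef a \<alpha> * monom \<alpha>)"
  using lin_comb_eq_sum lin_comb_coef by metis

lemma coef_expansion_supp: "a = (\<Sum>\<alpha>\<in>supp (coef a). coef a \<alpha> * monom \<alpha>)"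
  using coef_expansion[OF finite_supp_coef] by blast

lemma coef_inject: "(\<And>\<alpha>. coef a \<alpha> = coef b \<alpha>) \<Longrightarrow> a = b"
  using lin_comb_coef by (metis ext)

lemma coef_sum_monom:
  assumes "finite S" "\<And>\<alpha>. c \<alpha> \<in> R" "\<And>\<alpha>. c \<alpha> \<noteq> 0 \<Longrightarrow> \<alpha> \<in> S \<and> expvec n \<alpha>"
  shows "coef (\<Sum>\<alpha>\<in>S. c \<alpha> * monom \<alpha>) = c"
proof (rule coef_eqI)
  have "supp c \<subseteq> S" using assms(3) unfolding supp_def by auto
  then show "(\<Sum>\<alpha>\<in>S. c \<alpha> * monom \<alpha>) = lin_comb x n c" using lin_comb_eq_sum[OF assms(1)] by metis
  show "coeff_family R n c"
    using finite_subset[OF \<open>supp c \<subseteq> S\<close> assms(1)] assms(2,3) unfolding coeff_family_def supp_def by blast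
qed

lemma coef_add: "coef (a + b) \<alpha> = coef a \<alpha> + coef b \<alpha>"
proof -
  let ?S = "supp (coef a) \<union> supp (coef b)"
  have fin: "finite ?S" using finite_supp_coef by simp
  have eq: "a + b = (\<Sum>\<gamma>\<in>?S. (coef a \<gamma> + coef b \<gamma>) * monom \<gamma>)"
    using coef_expansion[OF fin, of a, symmetric] coef_expansion[OF fin, of b, symmetric]
    by (simp add: sum.distrib distrib_right)
  have "coef (\<Sum>\<gamma>\<in>?S. (coef a \<gamma> + coef b \<gamma>) * monom \<gamma>) = (\<lambda>\<gamma>. coef a \<gamma> + coef b \<gamma>)"
  proof (rule coef_sum_monom[OF fin])
    show "coef a \<gamma> + coef b \<gamma> \<in> R" for \<gamma> using R_add coef_in_R by blast
    show "\<gamma> \<in> ?S \<and> expvec n \<gamma>" if "coef a \<gamma> + coef b \<gamma> \<noteq> 0" for \<gamma>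
    proof (cases "coef a \<gamma> = 0")
      case True
      then have "coef b \<gamma> \<noteq> 0" using that by simp
      then show ?thesis using expvec_coef[of b \<gamma>] by (simp add: supp_def)
    qed (use expvec_coef[of a \<gamma>] in \<open>simp add: supp_def\<close>)
  qed
  then show ?thesis unfolding eq by simp
qed

lemma coef_mult_left:
  assumes "r \<in> R"
  shows "coef (r * a) \<alpha> = r * coef a \<alpha>"
proof -
  have eq: "r * a = (\<Sum>\<gamma>\<in>supp (coef a). (r * coef a \<gamma>) * monom \<gamma>)"
    using arg_cong[OF coef_expansion_supp[of a], of "(*) r"] by (simp add: sum_distrib_left mult.assoc)
  have "coef (\<Sum>\<gamma>\<in>supp (coef a). (r * coef a \<gamma>) * monom \<gamma>) = (\<lambda>\<gamma>. r * coef a \<gamma>)"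
  proof (rule coef_sum_monom[OF finite_supp_coef])
    show "r * coef a \<gamma> \<in> R" for \<gamma> using R_mult[OF assms coef_in_R] .
    show "\<gamma> \<in> supp (coef a) \<and> expvec n \<gamma>" if "r * coef a \<gamma> \<noteq> 0" for \<gamma>
      using that expvec_coef[of a \<gamma>] by (cases "coef a \<gamma> = 0") (auto simp: supp_def)
  qed
  then show ?thesis unfolding eq by simp
qed

lemma coef_zero: "coef 0 \<alpha> = 0"
  using coef_mult_left[OF R_zero, of 0] by simp

lemma coef_diff: "coef (a - b) \<alpha> = coef a \<alpha> - coef b \<alpha>"
proof -
  have "- 1 \<in> R" using R_diff[OF R_zero R_one] by simp
  then show ?thesis using coef_add[of a "- 1 * b"] coef_mult_left[of "- 1" b] by simp
qed

lemma coef_sum: "coef (sum f S) \<alpha> = (\<Sum>s\<in>S. coef (f s) \<alpha>)"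
  by (induction S rule: infinite_finite_induct) (simp_all add: coef_zero coef_add)

lemma coef_monom:
  assumes "c \<in> R" "expvec n \<gamma>"
  shows "coef (c * monom \<gamma>) \<alpha> = (if \<alpha> = \<gamma> then c else 0)"
proof -
  have "coef (\<Sum>\<beta>\<in>{\<gamma>}. (if \<beta> = \<gamma> then c else 0) * monom \<beta>) = (\<lambda>\<beta>. if \<beta> = \<gamma> then c else 0)"
    using assms R_zero by (intro coef_sum_monom) (auto split: if_splits)
  then show ?thesis by simp
qed

lemma coef_const: "c \<in> R \<Longrightarrow> coef c \<alpha> = (if \<alpha> = 0 then c else 0)"
  using coef_monom[OF _ expvec_zero, of c \<alpha>] by (simp add: std_monomial_zero)

lemma finite_range_coef: "finite (range (coef a))"
proof -
  have "range (coef a) \<subseteq> insert 0 (coef a ` supp (coef a))" by (auto simp: supp_def)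
  then show ?thesis using finite_supp_coef finite_subset by blast
qed

section \<open>The commutation rules\<close>

lemma sigma_in_R: "i < n \<Longrightarrow> r \<in> R \<Longrightarrow> \<sigma> i r \<in> R"
  and delta_in_R: "i < n \<Longrightarrow> r \<in> R \<Longrightarrow> \<delta> i r \<in> R"
  and x_mult_R: "i < n \<Longrightarrow> r \<in> R \<Longrightarrow> x i * r = \<sigma> i r * x i + \<delta> i r"
  using families unfolding assoc_families_def by blast+

lemma linear_coeffs_unique:
  assumes "i < n" "s \<in> R" "t \<in> R" "s' \<in> R" "t' \<in> R" "s * x i + t = s' * x i + t'"
  shows "s = s'" "t = t'"
proof -
  have coefs: "coef (s * x i + t) (unit_vec i) = s \<and> coef (s * x i + t) 0 = t"
    if "s \<in> R" "t \<in> R" for s t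
  proof -
    have "unit_vec i \<noteq> 0" by (auto simp: unit_vec_def fun_eq_iff)
    then show ?thesis
      using coef_monom[OF that(1) expvec_unit_vec[OF assms(1)]] coef_const[OF that(2)]
      unfolding std_monomial_unit_vec[OF assms(1)] by (simp add: coef_add)
  qed
  show "s = s'" "t = t'" using coefs[OF assms(2,3)] coefs[OF assms(4,5)] assms(6) by metis+
qed

lemma sigma_delta_mult:
  assumes "i < n" "r \<in> R" "s \<in> R"
  shows "\<sigma> i (r * s) = \<sigma> i r * \<sigma> i s" and "\<delta> i (r * s) = \<sigma> i r * \<delta> i s + \<delta> i r * s"
proof -
  have "\<sigma> i (r * s) * x i + \<delta> i (r * s) = (x i * r) * s"
    using x_mult_R[OF assms(1) R_mult[OF assms(2,3)]] by (simp add: mult.assoc)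
  also have "\<dots> = \<sigma> i r * (x i * s) + \<delta> i r * s"
    by (simp add: x_mult_R[OF assms(1,2)] distrib_right mult.assoc)
  also have "\<dots> = (\<sigma> i r * \<sigma> i s) * x i + (\<sigma> i r * \<delta> i s + \<delta> i r * s)"
    by (simp add: x_mult_R[OF assms(1,3)] distrib_left mult.assoc add.assoc)
  finally have eq: "\<sigma> i (r * s) * x i + \<delta> i (r * s) = (\<sigma> i r * \<sigma> i s) * x i + (\<sigma> i r * \<delta> i s + \<delta> i r * s)" .
  have "r * s \<in> R" using R_mult[OF assms(2,3)] .
  then show "\<sigma> i (r * s) = \<sigma> i r * \<sigma> i s" "\<delta> i (r * s) = \<sigma> i r * \<delta> i s + \<delta> i r * s"
    using linear_coeffs_unique[OF assms(1) _ _ _ _ eq] assms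
    by (simp_all add: R_mult R_add sigma_in_R delta_in_R)
qed

lemma sigma_delta_one:
  assumes "i < n"
  shows "\<sigma> i 1 = 1" and "\<delta> i 1 = 0"
proof -
  have "\<sigma> i 1 * x i + \<delta> i 1 = 1 * x i + 0" using x_mult_R[OF assms R_one] by simp
  from linear_coeffs_unique[OF assms _ _ _ _ this]
  show "\<sigma> i 1 = 1" "\<delta> i 1 = 0" by (simp_all add: sigma_in_R delta_in_R assms R_one R_zero)
qed

lemma sigma_delta_diff:
  assumes "i < n" "r \<in> R" "s \<in> R"
  shows "\<sigma> i (r - s) = \<sigma> i r - \<sigma> i s" and "\<delta> i (r - s) = \<delta> i r - \<delta> i s"
proof -
  have "\<sigma> i (r - s) * x i + \<delta> i (r - s) = x i * r - x i * s"
    using x_mult_R[OF assms(1) R_diff[OF assms(2,3)]] by (simp add: right_diff_distrib)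
  also have "\<dots> = (\<sigma> i r - \<sigma> i s) * x i + (\<delta> i r - \<delta> i s)"
    by (simp add: x_mult_R[OF assms(1,2)] x_mult_R[OF assms(1,3)] algebra_simps)
  finally have eq: "\<sigma> i (r - s) * x i + \<delta> i (r - s) = (\<sigma> i r - \<sigma> i s) * x i + (\<delta> i r - \<delta> i s)" .
  have "r - s \<in> R" using R_diff[OF assms(2,3)] .
  then show "\<sigma> i (r - s) = \<sigma> i r - \<sigma> i s" "\<delta> i (r - s) = \<delta> i r - \<delta> i s"
    using linear_coeffs_unique[OF assms(1) _ _ _ _ eq] assms
    by (simp_all add: R_diff sigma_in_R delta_in_R)
qed

lemma mult_sigma_eq_0_iff: "i < n \<Longrightarrow> a \<in> R \<Longrightarrow> b \<in> R \<Longrightarrow> a * \<sigma> i b = 0 \<longleftrightarrow> a * b = 0"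
  using Sigma_compat expvec_unit_vec fam_pow_unit_vec unfolding Sigma_compatible_def by metis

lemma mult_delta_eq_0: "i < n \<Longrightarrow> a \<in> R \<Longrightarrow> b \<in> R \<Longrightarrow> a * b = 0 \<Longrightarrow> a * \<delta> i b = 0"
  using Delta_compat expvec_unit_vec fam_pow_unit_vec unfolding Delta_compatible_def by metis

lemma idempotent_sigma_delta:
  assumes "i < n" "e \<in> R" "e * e = e"
  shows "\<sigma> i e = e" and "\<delta> i e = 0"
proof -
  have ome: "1 - e \<in> R" using R_diff[OF R_one assms(2)] .
  have ann: "(1 - e) * e = 0" "e * (1 - e) = 0" using assms(3) by (simp_all add: algebra_simps)
  have "(1 - e) * \<sigma> i e = 0" using mult_sigma_eq_0_iff[OF assms(1) ome assms(2)] ann(1) by simp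
  moreover have "e * (1 - \<sigma> i e) = 0"
    using mult_sigma_eq_0_iff[OF assms(1) assms(2) ome] ann(2)
      sigma_delta_diff(1)[OF assms(1) R_one assms(2)] sigma_delta_one[OF assms(1)] by simp
  ultimately show "\<sigma> i e = e" by (simp add: algebra_simps)
  have "(1 - e) * \<delta> i e = 0" using mult_delta_eq_0[OF assms(1) ome assms(2) ann(1)] .
  moreover have "e * \<delta> i e = 0"
    using mult_delta_eq_0[OF assms(1) assms(2) ome ann(2)]
      sigma_delta_diff(2)[OF assms(1) R_one assms(2)] sigma_delta_one[OF assms(1)] by simp
  ultimately show "\<delta> i e = 0" by (simp add: algebra_simps)
qed

lemma monom_commute_idempotent:
  assumes "e \<in> R" "e * e = e"
  shows "monom \<gamma> * e = e * monom \<gamma>"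
  using x_mult_R[OF _ assms(1)] idempotent_sigma_delta[OF _ assms] by (intro std_monomial_commute) simp

lemma coef_mult_idempotent:
  assumes "e \<in> R" "e * e = e"
  shows "coef (t * e) \<alpha> = coef t \<alpha> * e"
proof -
  have "t * e = (\<Sum>\<gamma>\<in>supp (coef t). coef t \<gamma> * (monom \<gamma> * e))"
    using arg_cong[OF coef_expansion_supp[of t], of "\<lambda>z. z * e"] by (simp add: sum_distrib_right mult.assoc)
  also have "\<dots> = (\<Sum>\<gamma>\<in>supp (coef t). (coef t \<gamma> * e) * monom \<gamma>)"
    using monom_commute_idempotent[OF assms] by (simp add: mult.assoc)
  finally have eq: "t * e = \<dots>" .
  have "coef (\<Sum>\<gamma>\<in>supp (coef t). (coef t \<gamma> * e) * monom \<gamma>) = (\<lambda>\<gamma>. coef t \<gamma> * e)"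
  proof (rule coef_sum_monom[OF finite_supp_coef])
    show "coef t \<gamma> * e \<in> R" for \<gamma> using R_mult[OF coef_in_R assms(1)] .
    show "\<gamma> \<in> supp (coef t) \<and> expvec n \<gamma>" if "coef t \<gamma> * e \<noteq> 0" for \<gamma>
      using that expvec_coef[of t \<gamma>] by (cases "coef t \<gamma> = 0") (auto simp: supp_def)
  qed
  then show ?thesis unfolding eq by simp
qed

lemma left_semicentral_extend:
  assumes "left_semicentral R e"
  shows "t * e = e * t * e"
proof (rule coef_inject)
  fix \<alpha>
  have e: "e \<in> R" "e * e = e" using assms unfolding left_semicentral_def by auto
  have "coef (t * e) \<alpha> = coef t \<alpha> * e" by (rule coef_mult_idempotent[OF e])
  also have "\<dots> = e * coef t \<alpha> * e" using assms coef_in_R unfolding left_semicentral_def by blast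
  also have "\<dots> = coef (e * t * e) \<alpha>" by (simp add: coef_mult_idempotent[OF e] coef_mult_left[OF e(1)])
  finally show "coef (t * e) \<alpha> = coef (e * t * e) \<alpha>" .
qed

lemma right_semicentral_extend:
  assumes "right_semicentral R e"
  shows "e * t = e * t * e"
proof (rule coef_inject)
  fix \<alpha>
  have e: "e \<in> R" "e * e = e" using assms unfolding right_semicentral_def by auto
  have "coef (e * t) \<alpha> = e * coef t \<alpha>" by (rule coef_mult_left[OF e(1)])
  also have "\<dots> = e * coef t \<alpha> * e" using assms coef_in_R unfolding right_semicentral_def by blast
  also have "\<dots> = coef (e * t * e) \<alpha>" by (simp add: coef_mult_idempotent[OF e] coef_mult_left[OF e(1)])
  finally show "coef (e * t) \<alpha> = coef (e * t * e) \<alpha>" .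
qed

lemma unit_in_sigma:
  assumes "i < n" "unit_in R u"
  shows "unit_in R (\<sigma> i u)"
proof -
  obtain u' where "u \<in> R" "u' \<in> R" "u * u' = 1" "u' * u = 1" using assms(2) unfolding unit_in_def by blast
  then show ?thesis
    using sigma_delta_mult(1)[OF assms(1)] sigma_delta_one[OF assms(1)] sigma_in_R[OF assms(1)]
    unfolding unit_in_def by metis
qed

end

section \<open>Leading terms\<close>

context compatible_skew_PBW
begin

definition deg_lt :: "nat \<Rightarrow> 'a set" where
  "deg_lt k = {v. \<forall>\<gamma>. coef v \<gamma> \<noteq> 0 \<longrightarrow> deg \<gamma> < k}"

lemma zero_in_deg_lt: "0 \<in> deg_lt k"
  unfolding deg_lt_def by (simp add: coef_zero)

lemma deg_lt_add:
  assumes "v \<in> deg_lt k" "w \<in> deg_lt k"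
  shows "v + w \<in> deg_lt k"
  unfolding deg_lt_def
proof (intro CollectI allI impI)
  fix \<gamma> assume "coef (v + w) \<gamma> \<noteq> 0"
  then have "coef v \<gamma> \<noteq> 0 \<or> coef w \<gamma> \<noteq> 0" by (auto simp: coef_add)
  then show "deg \<gamma> < k" using assms unfolding deg_lt_def by blast
qed

lemma deg_lt_mult_left: "r \<in> R \<Longrightarrow> v \<in> deg_lt k \<Longrightarrow> r * v \<in> deg_lt k"
  unfolding deg_lt_def by (auto simp: coef_mult_left) (metis mult_zero_right)

lemma deg_lt_mono: "v \<in> deg_lt k \<Longrightarrow> k \<le> k' \<Longrightarrow> v \<in> deg_lt k'"
  unfolding deg_lt_def by fastforce

lemma deg_lt_sum: "(\<And>s. s \<in> S \<Longrightarrow> F s \<in> deg_lt k) \<Longrightarrow> sum F S \<in> deg_lt k"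
  by (induction S rule: infinite_finite_induct) (simp_all add: zero_in_deg_lt deg_lt_add)

lemma monom_in_deg_lt: "c \<in> R \<Longrightarrow> expvec n \<gamma> \<Longrightarrow> deg \<gamma> < k \<Longrightarrow> c * monom \<gamma> \<in> deg_lt k"
  unfolding deg_lt_def by (simp add: coef_monom)

lemma coef_deg_lt: "v \<in> deg_lt k \<Longrightarrow> k \<le> deg \<gamma> \<Longrightarrow> coef v \<gamma> = 0"
  unfolding deg_lt_def by force

lemma x_mult_expansion:
  assumes "j < n"
  shows "x j * v = (\<Sum>\<gamma>\<in>supp (coef v). \<sigma> j (coef v \<gamma>) * (x j * monom \<gamma>) + \<delta> j (coef v \<gamma>) * monom \<gamma>)"
proof -
  have "x j * v = x j * (\<Sum>\<gamma>\<in>supp (coef v). coef v \<gamma> * monom \<gamma>)"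
    using coef_expansion_supp[of v] by (rule arg_cong)
  also have "\<dots> = (\<Sum>\<gamma>\<in>supp (coef v). (x j * coef v \<gamma>) * monom \<gamma>)"
    by (simp add: sum_distrib_left mult.assoc)
  also have "\<dots> = (\<Sum>\<gamma>\<in>supp (coef v). \<sigma> j (coef v \<gamma>) * (x j * monom \<gamma>) + \<delta> j (coef v \<gamma>) * monom \<gamma>)"
    unfolding x_mult_R[OF assms coef_in_R] by (simp add: distrib_right mult.assoc)
  finally show ?thesis .
qed

lemma lin_span1_mult_deg_lt:
  assumes "L \<in> lin_span1 R x n" "w \<in> deg_lt k" "\<And>i. i < n \<Longrightarrow> x i * w \<in> deg_lt k"
  shows "L * w \<in> deg_lt k"
proof -
  obtain r0 r where r: "r0 \<in> R" "\<And>i. i < n \<Longrightarrow> r i \<in> R" "L = r0 + (\<Sum>i<n. r i * x i)"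
    using assms(1) unfolding lin_span1_def by blast
  have "L * w = r0 * w + (\<Sum>i<n. r i * (x i * w))"
    unfolding r(3) by (simp add: distrib_right sum_distrib_right mult.assoc)
  moreover have "(\<Sum>i<n. r i * (x i * w)) \<in> deg_lt k"
    using deg_lt_mult_left r(2) assms(3) by (intro deg_lt_sum) simp
  ultimately show ?thesis using deg_lt_add[OF deg_lt_mult_left[OF r(1) assms(2)]] by simp
qed

lemma x_mult_x_swap:
  assumes "j < i" "i < n"
  obtains d L where "unit_in R d" "L \<in> lin_span1 R x n" "x i * x j = d * (x j * x i) + L"
proof -
  obtain d where "unit_in R d" "x i * x j - d * (x j * x i) \<in> lin_span1 R x n"
    using bijective assms unfolding bijective_skew_PBW_def by blast
  then show thesis using that[of d "x i * x j - d * (x j * x i)"] by simp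
qed

definition has_leading_term :: "'a \<Rightarrow> 'a \<Rightarrow> (nat \<Rightarrow> nat) \<Rightarrow> bool" where
  "has_leading_term v c \<gamma> \<longleftrightarrow> v - c * monom \<gamma> \<in> deg_lt (deg \<gamma>)"

lemma has_leading_term_monom: "has_leading_term (c * monom \<gamma>) c \<gamma>"
  unfolding has_leading_term_def by (simp add: zero_in_deg_lt)

lemma coef_has_leading_term:
  assumes "has_leading_term v c \<gamma>" "c \<in> R" "expvec n \<gamma>" "deg \<gamma> \<le> deg \<beta>"
  shows "coef v \<beta> = (if \<beta> = \<gamma> then c else 0)"
proof -
  have "coef (v - c * monom \<gamma>) \<beta> = 0"
    using assms(1,4) coef_deg_lt unfolding has_leading_term_def by blast
  then show ?thesis by (simp add: coef_diff coef_monom[OF assms(2,3)])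
qed

lemma has_leading_term_deg_lt:
  assumes "has_leading_term v c \<gamma>" "c \<in> R" "expvec n \<gamma>"
  shows "v \<in> deg_lt (deg \<gamma> + 1)"
proof -
  have "v = (v - c * monom \<gamma>) + c * monom \<gamma>" by simp
  moreover have "v - c * monom \<gamma> \<in> deg_lt (deg \<gamma> + 1)"
    using assms(1) deg_lt_mono unfolding has_leading_term_def by fastforce
  ultimately show ?thesis using monom_in_deg_lt[OF assms(2,3)] deg_lt_add by (metis less_add_one)
qed

lemma has_leading_term_mult_left:
  assumes "r \<in> R" "has_leading_term v c \<gamma>"
  shows "has_leading_term (r * v) (r * c) \<gamma>"
proof -
  have "r * v - r * c * monom \<gamma> = r * (v - c * monom \<gamma>)" by (simp add: algebra_simps)
  then show ?thesis using assms deg_lt_mult_left unfolding has_leading_term_def by metis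
qed

lemma has_leading_term_add:
  assumes "has_leading_term v c \<gamma>" "w \<in> deg_lt (deg \<gamma>)"
  shows "has_leading_term (v + w) c \<gamma>"
proof -
  have "v + w - c * monom \<gamma> = (v - c * monom \<gamma>) + w" by simp
  then show ?thesis using assms deg_lt_add unfolding has_leading_term_def by metis
qed

lemma x_mult_deg_lt:
  assumes x_monom: "\<And>\<gamma>. expvec n \<gamma> \<Longrightarrow> deg \<gamma> < D \<Longrightarrow>
      \<exists>u\<in>R. has_leading_term (x j * monom \<gamma>) u (\<gamma> + unit_vec j)"
    and "v \<in> deg_lt D" "j < n"
  shows "x j * v \<in> deg_lt (D + 1)"
  unfolding x_mult_expansion[OF assms(3), of v]
proof (intro deg_lt_sum deg_lt_add)
  fix \<gamma> assume "\<gamma> \<in> supp (coef v)"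
  then have ex: "expvec n \<gamma>" and dg: "deg \<gamma> < D"
    using expvec_coef assms(2) unfolding supp_def deg_lt_def by auto
  obtain u where "u \<in> R" "has_leading_term (x j * monom \<gamma>) u (\<gamma> + unit_vec j)"
    using x_monom[OF ex dg] by blast
  then have "x j * monom \<gamma> \<in> deg_lt (deg \<gamma> + 2)"
    using has_leading_term_deg_lt expvec_add[OF ex expvec_unit_vec[OF assms(3)]]
      degn_add degn_unit_vec[OF assms(3)] by fastforce
  then show "\<sigma> j (coef v \<gamma>) * (x j * monom \<gamma>) \<in> deg_lt (D + 1)"
    using deg_lt_mono dg deg_lt_mult_left sigma_in_R[OF assms(3) coef_in_R] by simp
  show "\<delta> j (coef v \<gamma>) * monom \<gamma> \<in> deg_lt (D + 1)"
    using monom_in_deg_lt[OF delta_in_R[OF assms(3) coef_in_R] ex] dg by simp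
qed

lemma has_leading_term_x_mult:
  assumes "has_leading_term v c \<gamma>" "c \<in> R" "expvec n \<gamma>" "j < n"
    and x_monom: "has_leading_term (x j * monom \<gamma>) u (\<gamma> + unit_vec j)"
    and x_lower: "\<And>w. w \<in> deg_lt (deg \<gamma>) \<Longrightarrow> x j * w \<in> deg_lt (deg \<gamma> + 1)"
  shows "has_leading_term (x j * v) (\<sigma> j c * u) (\<gamma> + unit_vec j)"
proof -
  define g where "g = v - c * monom \<gamma>"
  define h where "h = x j * monom \<gamma> - u * monom (\<gamma> + unit_vec j)"
  have deg: "deg (\<gamma> + unit_vec j) = deg \<gamma> + 1" using degn_add degn_unit_vec[OF assms(4)] by simp
  have "x j * v = x j * (c * monom \<gamma>) + x j * g" unfolding g_def by (simp add: algebra_simps)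
  also have "x j * (c * monom \<gamma>) = \<sigma> j c * (x j * monom \<gamma>) + \<delta> j c * monom \<gamma>"
    by (simp add: mult.assoc[symmetric] x_mult_R[OF assms(4,2)] distrib_right)
  also have "x j * monom \<gamma> = u * monom (\<gamma> + unit_vec j) + h" unfolding h_def by simp
  finally have "x j * v - \<sigma> j c * u * monom (\<gamma> + unit_vec j) = \<sigma> j c * h + \<delta> j c * monom \<gamma> + x j * g"
    by (simp add: algebra_simps)
  moreover have "\<sigma> j c * h \<in> deg_lt (deg \<gamma> + 1)"
    using x_monom deg deg_lt_mult_left[OF sigma_in_R[OF assms(4,2)]] unfolding has_leading_term_def h_def
    by simp
  moreover have "\<delta> j c * monom \<gamma> \<in> deg_lt (deg \<gamma> + 1)"
    using monom_in_deg_lt[OF delta_in_R[OF assms(4,2)] assms(3)] by simp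
  moreover have "x j * g \<in> deg_lt (deg \<gamma> + 1)"
    using x_lower assms(1) unfolding has_leading_term_def g_def by blast
  ultimately show ?thesis unfolding has_leading_term_def deg by (simp add: deg_lt_add)
qed

lemma has_leading_term_x_mult_monom_below:
  assumes "i < n" "\<And>k. k < i \<Longrightarrow> \<gamma> k = 0"
  shows "has_leading_term (x i * monom \<gamma>) 1 (\<gamma> + unit_vec i)"
  using has_leading_term_monom[of 1] std_monomial_add_unit_vec[where x = x, OF assms] by simp

lemma x_mult_monom_leading_step:
  assumes IH: "\<And>\<gamma>' i'. expvec n \<gamma>' \<Longrightarrow> deg \<gamma>' < deg \<gamma> \<Longrightarrow> i' < n \<Longrightarrow>
      \<exists>u. unit_in R u \<and> has_leading_term (x i' * monom \<gamma>') u (\<gamma>' + unit_vec i')"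
    and "expvec n \<gamma>" "i < n"
  shows "\<exists>u. unit_in R u \<and> has_leading_term (x i * monom \<gamma>) u (\<gamma> + unit_vec i)"
proof (cases "\<forall>k<i. \<gamma> k = 0")
  case True
  then show ?thesis using has_leading_term_x_mult_monom_below[OF assms(3)] unit_in_one[OF subring_R] by blast
next
  case False
  \<comment> \<open>\<open>x^\<gamma> = x\<^sub>j x^\<gamma>'\<close> for the first variable \<open>x\<^sub>j\<close> of \<open>x^\<gamma>\<close>, and \<open>j < i\<close>: swap \<open>x\<^sub>i\<close> with \<open>x\<^sub>j\<close>
    and apply the induction hypothesis to \<open>x\<^sub>i x^\<gamma>'\<close>\<close>
  then obtain k0 where "k0 < i" "\<gamma> k0 \<noteq> 0" by blast
  then obtain j \<gamma>' where j: "j < n" "\<gamma> = \<gamma>' + unit_vec j" "expvec n \<gamma>'"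
    "\<And>k. k < j \<Longrightarrow> \<gamma> k = 0" "\<And>k. k < j \<Longrightarrow> \<gamma>' k = 0"
    using expvec_split_first[OF assms(2)] by (metis zero_fun_apply)
  have "j < i" using j(4) \<open>k0 < i\<close> \<open>\<gamma> k0 \<noteq> 0\<close> by (meson le_less_trans not_less)
  have deg: "deg \<gamma> = deg \<gamma>' + 1" "deg (\<gamma>' + unit_vec i) = deg \<gamma>"
    using j(1,2) assms(3) by (simp_all add: degn_add degn_unit_vec)
  have x_lower: "x k * w \<in> deg_lt (deg \<gamma> + 1)" if "w \<in> deg_lt (deg \<gamma>)" "k < n" for w k
    by (rule x_mult_deg_lt[OF _ that]) (use IH[OF _ _ that(2)] unit_in_R in blast)
  obtain u' where u': "unit_in R u'" "has_leading_term (x i * monom \<gamma>') u' (\<gamma>' + unit_vec i)"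
    using IH[OF j(3) _ assms(3)] deg(1) by auto
  have "has_leading_term (x j * monom (\<gamma>' + unit_vec i)) 1 (\<gamma>' + unit_vec i + unit_vec j)"
    using j(5) \<open>j < i\<close> by (intro has_leading_term_x_mult_monom_below[OF j(1)]) (simp add: unit_vec_def)
  from has_leading_term_x_mult[OF u'(2) unit_in_R[OF u'(1)]
      expvec_add[OF j(3) expvec_unit_vec[OF assms(3)]] j(1) this] x_lower j(1) deg(2)
  have "has_leading_term (x j * (x i * monom \<gamma>')) (\<sigma> j u') (\<gamma>' + unit_vec i + unit_vec j)"
    by simp
  then have lead: "has_leading_term (x j * (x i * monom \<gamma>')) (\<sigma> j u') (\<gamma> + unit_vec i)"
    using j(2) by (simp add: ac_simps)
  obtain d L where d: "unit_in R d" "L \<in> lin_span1 R x n" "x i * x j = d * (x j * x i) + L"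
    using x_mult_x_swap[OF \<open>j < i\<close> assms(3)] .
  have "x i * monom \<gamma> = (x i * x j) * monom \<gamma>'"
    using std_monomial_add_unit_vec[where \<gamma> = \<gamma>' and x = x, OF j(1) j(5)] j(2) by (simp add: mult.assoc)
  then have eq: "x i * monom \<gamma> = d * (x j * (x i * monom \<gamma>')) + L * monom \<gamma>'"
    unfolding d(3) by (simp add: distrib_right mult.assoc)
  have "monom \<gamma>' \<in> deg_lt (deg \<gamma>)"
    using monom_in_deg_lt[OF R_one j(3), of "deg \<gamma>"] deg(1) by simp
  then have "L * monom \<gamma>' \<in> deg_lt (deg \<gamma> + 1)"
    using lin_span1_mult_deg_lt[OF d(2)] x_lower deg_lt_mono by fastforce
  then have "has_leading_term (x i * monom \<gamma>) (d * \<sigma> j u') (\<gamma> + unit_vec i)"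
    unfolding eq using has_leading_term_add has_leading_term_mult_left[OF unit_in_R[OF d(1)] lead]
      degn_add degn_unit_vec[OF assms(3)] by simp
  then show ?thesis using unit_in_mult[OF subring_R d(1) unit_in_sigma[OF j(1) u'(1)]] by blast
qed

lemma x_mult_monom_leading:
  assumes "expvec n \<gamma>" "i < n"
  obtains u where "unit_in R u" "has_leading_term (x i * monom \<gamma>) u (\<gamma> + unit_vec i)"
proof -
  have "\<forall>\<gamma> i. expvec n \<gamma> \<longrightarrow> deg \<gamma> = d \<longrightarrow> i < n \<longrightarrow>
      (\<exists>u. unit_in R u \<and> has_leading_term (x i * monom \<gamma>) u (\<gamma> + unit_vec i))" for d
    by (induction d rule: less_induct) (blast intro: x_mult_monom_leading_step)
  then show thesis using assms that by blast
qed

lemma x_mult_deg_lt_Suc: "v \<in> deg_lt D \<Longrightarrow> j < n \<Longrightarrow> x j * v \<in> deg_lt (D + 1)"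
  by (rule x_mult_deg_lt) (use x_mult_monom_leading unit_in_R in metis)

lemma monom_mult_monom_leading:
  assumes "expvec n \<alpha>" "expvec n \<beta>" "s \<in> R"
  shows "\<exists>w\<in>R. (\<forall>a\<in>R. a * w = 0 \<longrightarrow> a * s = 0) \<and>
    has_leading_term (monom \<alpha> * s * monom \<beta>) w (\<alpha> + \<beta>)"
  using assms(1)
proof (induct \<alpha> rule: expvec_induct)
  case zero
  have "monom 0 * s * monom \<beta> = s * monom \<beta>" by (simp add: std_monomial_zero)
  then show ?case using assms(3) has_leading_term_monom[of s \<beta>] by (metis add_0)
next
  case (add_unit_vec \<alpha> j)
  obtain w where w: "w \<in> R" "\<forall>a\<in>R. a * w = 0 \<longrightarrow> a * s = 0"
    "has_leading_term (monom \<alpha> * s * monom \<beta>) w (\<alpha> + \<beta>)"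
    using add_unit_vec(4) by blast
  have ex: "expvec n (\<alpha> + \<beta>)" using expvec_add[OF add_unit_vec(1) assms(2)] .
  obtain u where u: "unit_in R u" "has_leading_term (x j * monom (\<alpha> + \<beta>)) u (\<alpha> + \<beta> + unit_vec j)"
    using x_mult_monom_leading[OF ex add_unit_vec(2)] .
  have "has_leading_term (x j * (monom \<alpha> * s * monom \<beta>)) (\<sigma> j w * u) (\<alpha> + \<beta> + unit_vec j)"
    using has_leading_term_x_mult[OF w(3) w(1) ex add_unit_vec(2) u(2)]
      x_mult_deg_lt_Suc add_unit_vec(2) by blast
  moreover have "monom (\<alpha> + unit_vec j) * s * monom \<beta> = x j * (monom \<alpha> * s * monom \<beta>)"
    using std_monomial_add_unit_vec[where \<gamma> = \<alpha> and x = x, OF add_unit_vec(2,3), symmetric]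
    by (simp add: mult.assoc)
  moreover have "\<alpha> + \<beta> + unit_vec j = \<alpha> + unit_vec j + \<beta>" by (simp add: ac_simps)
  ultimately have "has_leading_term (monom (\<alpha> + unit_vec j) * s * monom \<beta>) (\<sigma> j w * u) (\<alpha> + unit_vec j + \<beta>)"
    by simp
  moreover have "a * s = 0" if "a \<in> R" "a * (\<sigma> j w * u) = 0" for a
  proof -
    have "a * \<sigma> j w = 0" using unit_in_cancel[OF u(1)] that(2) by (simp add: mult.assoc)
    then show ?thesis using mult_sigma_eq_0_iff[OF add_unit_vec(2) that(1) w(1)] w(2) that(1) by blast
  qed
  ultimately show ?case
    using R_mult[OF sigma_in_R[OF add_unit_vec(2) w(1)] unit_in_R[OF u(1)]] by blast
qed

end

section \<open>Annihilation of coefficients\<close>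

context compatible_skew_PBW
begin

lemma mult_expansion: "t * w = (\<Sum>\<alpha>\<in>supp (coef t). coef t \<alpha> * (monom \<alpha> * w))"
proof -
  have "t * w = (\<Sum>\<alpha>\<in>supp (coef t). coef t \<alpha> * monom \<alpha>) * w"
    using coef_expansion_supp[of t] by (rule arg_cong)
  also have "\<dots> = (\<Sum>\<alpha>\<in>supp (coef t). coef t \<alpha> * (monom \<alpha> * w))"
    by (simp add: sum_distrib_right mult.assoc)
  finally show ?thesis .
qed

lemma mult_eq_0_if_coef:
  assumes "a \<in> R" "\<And>\<gamma>. a * coef w \<gamma> = 0"
  shows "a * w = 0"
proof (rule coef_inject)
  show "coef (a * w) \<gamma> = coef 0 \<gamma>" for \<gamma> using assms by (simp add: coef_mult_left coef_zero)
qed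

definition sigma_delta_ideal :: "'a set \<Rightarrow> bool" where
  "sigma_delta_ideal J \<longleftrightarrow> J \<subseteq> R \<and> 0 \<in> J \<and> (\<forall>a\<in>J. \<forall>b\<in>J. a + b \<in> J) \<and>
     (\<forall>a\<in>J. \<forall>r\<in>R. r * a \<in> J \<and> a * r \<in> J) \<and> (\<forall>i<n. \<forall>a\<in>J. \<sigma> i a \<in> J \<and> \<delta> i a \<in> J)"

lemma coef_mult_in_sigma_delta_ideal:
  assumes J: "sigma_delta_ideal J" and v: "\<And>\<beta>. coef v \<beta> \<in> J"
  shows "coef (t * v) \<alpha> \<in> J"
proof -
  have J_sum: "coef (sum F S) \<beta> \<in> J" if "\<And>s \<beta>. s \<in> S \<Longrightarrow> coef (F s) \<beta> \<in> J" for F and S :: "'b set" and \<beta>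
    unfolding coef_sum using that J unfolding sigma_delta_ideal_def
    by (induction S rule: infinite_finite_induct) auto
  have J_mult: "coef (a * w) \<beta> \<in> J" if "a \<in> J" for a w \<beta>
    using that J coef_in_R unfolding sigma_delta_ideal_def by (auto simp: coef_mult_left)
  have J_x: "coef (x i * w) \<beta> \<in> J" if "\<And>\<beta>. coef w \<beta> \<in> J" "i < n" for w i \<beta>
    unfolding x_mult_expansion[OF that(2), of w]
  proof (rule J_sum)
    fix \<gamma> \<beta>
    have "\<sigma> i (coef w \<gamma>) \<in> J" "\<delta> i (coef w \<gamma>) \<in> J" using J that unfolding sigma_delta_ideal_def by blast+
    then show "coef (\<sigma> i (coef w \<gamma>) * (x i * monom \<gamma>) + \<delta> i (coef w \<gamma>) * monom \<gamma>) \<beta> \<in> J"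
      using J J_mult unfolding sigma_delta_ideal_def by (simp add: coef_add)
  qed
  have J_monom: "coef (monom \<gamma> * v) \<beta> \<in> J" if "expvec n \<gamma>" for \<gamma> \<beta>
    using that
  proof (induct \<gamma> arbitrary: \<beta> rule: expvec_induct)
    case zero
    then show ?case using v by (simp add: std_monomial_zero[unfolded zero_fun_def])
  next
    case (add_unit_vec \<gamma> j)
    have "monom (\<gamma> + unit_vec j) * v = x j * (monom \<gamma> * v)"
      using std_monomial_add_unit_vec[where \<gamma> = \<gamma> and x = x, OF add_unit_vec(2,3), symmetric]
      by (simp add: mult.assoc)
    then show ?case using J_x[OF add_unit_vec(4) add_unit_vec(2)] by metis
  qed
  have "coef (coef t \<gamma> * (monom \<gamma> * v)) \<beta> \<in> J" if "\<gamma> \<in> supp (coef t)" for \<gamma> \<beta>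
    using J_monom expvec_coef that J coef_in_R unfolding supp_def sigma_delta_ideal_def
    by (simp add: coef_mult_left)
  then show ?thesis unfolding mult_expansion[of t v] by (intro J_sum) auto
qed

lemma sigma_delta_ideal_annihilator:
  assumes "K \<subseteq> R"
  shows "sigma_delta_ideal {b \<in> R. \<forall>a\<in>K. \<forall>r\<in>R. a * r * b = 0}"
  unfolding sigma_delta_ideal_def
proof (intro conjI ballI allI impI)
  fix a r b i
  assume a: "a \<in> {b \<in> R. \<forall>a\<in>K. \<forall>r\<in>R. a * r * b = 0}"
  then have aR: "a \<in> R" and ann: "\<And>k s. k \<in> K \<Longrightarrow> s \<in> R \<Longrightarrow> k * s * a = 0" by auto
  {
    assume "b \<in> {b \<in> R. \<forall>a\<in>K. \<forall>r\<in>R. a * r * b = 0}"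
    then show "a + b \<in> {b \<in> R. \<forall>a\<in>K. \<forall>r\<in>R. a * r * b = 0}"
      using aR ann R_add by (simp add: distrib_left)
  }
  assume r: "r \<in> R"
  have "k * s * (r * a) = 0" if "k \<in> K" "s \<in> R" for k s
    using ann[OF that(1) R_mult[OF that(2) r]] by (simp add: mult.assoc)
  then show "r * a \<in> {b \<in> R. \<forall>a\<in>K. \<forall>r\<in>R. a * r * b = 0}"
    using R_mult[OF r aR] by blast
  show "a * r \<in> {b \<in> R. \<forall>a\<in>K. \<forall>r\<in>R. a * r * b = 0}"
    using R_mult[OF aR r] ann by (simp add: mult.assoc[symmetric])
next
  fix a i
  assume i: "i < n" and a: "a \<in> {b \<in> R. \<forall>a\<in>K. \<forall>r\<in>R. a * r * b = 0}"
  then have aR: "a \<in> R" and ann: "\<And>k s. k \<in> K \<Longrightarrow> s \<in> R \<Longrightarrow> k * s * a = 0" by auto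
  have "k * s \<in> R" if "k \<in> K" "s \<in> R" for k s using that assms R_mult by blast
  then show "\<sigma> i a \<in> {b \<in> R. \<forall>a\<in>K. \<forall>r\<in>R. a * r * b = 0}"
    and "\<delta> i a \<in> {b \<in> R. \<forall>a\<in>K. \<forall>r\<in>R. a * r * b = 0}"
    using ann mult_sigma_eq_0_iff[OF i _ aR] mult_delta_eq_0[OF i _ aR] sigma_in_R[OF i aR]
      delta_in_R[OF i aR] by auto
qed (use R_zero in auto)

definition coeffs_annihilate :: "'a \<Rightarrow> 'a \<Rightarrow> bool" where
  "coeffs_annihilate f h \<longleftrightarrow> (\<forall>\<alpha> \<beta>. \<forall>r\<in>R. coef f \<alpha> * r * coef h \<beta> = 0)"

lemma coeffs_annihilate_imp_mult_eq_0:
  assumes "coeffs_annihilate f h"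
  shows "f * t * h = 0"
proof -
  let ?J = "{b \<in> R. \<forall>a\<in>range (coef f). \<forall>r\<in>R. a * r * b = 0}"
  have J: "sigma_delta_ideal ?J" using coef_in_R by (intro sigma_delta_ideal_annihilator) auto
  have "coef h \<beta> \<in> ?J" for \<beta> using assms coef_in_R unfolding coeffs_annihilate_def by auto
  then have "coef (monom \<alpha> * t * h) \<gamma> \<in> ?J" for \<alpha> \<gamma> by (rule coef_mult_in_sigma_delta_ideal[OF J])
  then have "coef f \<alpha> * 1 * coef (monom \<alpha> * t * h) \<gamma> = 0" for \<alpha> \<gamma> using R_one by blast
  then have "coef f \<alpha> * (monom \<alpha> * (t * h)) = 0" for \<alpha>
    using mult_eq_0_if_coef[OF coef_in_R] by (simp add: mult.assoc)
  then show ?thesis using mult_expansion[of f "t * h"] by (simp add: mult.assoc)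
qed

lemma coeffs_annihilate_const_left:
  "c \<in> R \<Longrightarrow> coeffs_annihilate c h \<longleftrightarrow> (\<forall>\<beta>. \<forall>r\<in>R. c * r * coef h \<beta> = 0)"
  unfolding coeffs_annihilate_def by (auto simp: coef_const)

lemma coeffs_annihilate_const_right:
  "c \<in> R \<Longrightarrow> coeffs_annihilate h c \<longleftrightarrow> (\<forall>\<beta>. \<forall>r\<in>R. coef h \<beta> * r * c = 0)"
  unfolding coeffs_annihilate_def by (auto simp: coef_const)

lemma mult_mult_expansion:
  "f * r * h = (\<Sum>\<alpha>\<in>supp (coef f). \<Sum>\<beta>\<in>supp (coef h). coef f \<alpha> * (monom \<alpha> * (r * coef h \<beta>) * monom \<beta>))"
proof -
  have "f * r * h = (\<Sum>\<alpha>\<in>supp (coef f). coef f \<alpha> * (monom \<alpha> * (r * h)))"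
    using mult_expansion[of f "r * h"] by (simp add: mult.assoc)
  also have "r * h = r * (\<Sum>\<beta>\<in>supp (coef h). coef h \<beta> * monom \<beta>)"
    using coef_expansion_supp[of h] by (rule arg_cong)
  finally show ?thesis by (simp add: sum_distrib_left mult.assoc)
qed

lemma coef_monom_mult_monom_above:
  assumes "expvec n \<alpha>" "expvec n \<beta>" "s \<in> R" "a \<in> R" "deg (\<alpha> + \<beta>) \<le> deg \<gamma>" "\<gamma> \<noteq> \<alpha> + \<beta>"
  shows "coef (a * (monom \<alpha> * s * monom \<beta>)) \<gamma> = 0"
proof -
  obtain w where "w \<in> R" "has_leading_term (monom \<alpha> * s * monom \<beta>) w (\<alpha> + \<beta>)"
    using monom_mult_monom_leading[OF assms(1-3)] by blast
  then show ?thesis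
    using coef_has_leading_term expvec_add[OF assms(1,2)] assms(4-6) by (simp add: coef_mult_left)
qed

text \<open>As the deg-lex order is compatible with addition, only the product of the leading terms
  \<open>p\<close> of \<open>f\<close> and \<open>q\<close> of \<open>h\<close> contributes to the coefficient of \<open>f r h\<close> at \<open>p + q\<close>.\<close>

lemma coef_mult_leading:
  assumes p: "p \<in> supp (coef f)" "\<And>\<alpha>. \<alpha> \<in> supp (coef f) \<Longrightarrow> \<alpha> \<noteq> p \<Longrightarrow> deglex_less n \<alpha> p"
    and q: "q \<in> supp (coef h)" "\<And>\<beta>. \<beta> \<in> supp (coef h) \<Longrightarrow> \<beta> \<noteq> q \<Longrightarrow> deglex_less n \<beta> q"
    and r: "r \<in> R"
  obtains w where "w \<in> R" "\<And>a. a \<in> R \<Longrightarrow> a * w = 0 \<Longrightarrow> a * (r * coef h q) = 0"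
    "coef (f * r * h) (p + q) = coef f p * w"
proof -
  let ?T = "\<lambda>\<alpha> \<beta>. coef f \<alpha> * (monom \<alpha> * (r * coef h \<beta>) * monom \<beta>)"
  have ex: "expvec n \<alpha>" if "\<alpha> \<in> supp (coef f) \<union> supp (coef h)" for \<alpha>
    using that expvec_coef unfolding supp_def by blast
  obtain w where w: "w \<in> R" "\<forall>a\<in>R. a * w = 0 \<longrightarrow> a * (r * coef h q) = 0"
    "has_leading_term (monom p * (r * coef h q) * monom q) w (p + q)"
    using monom_mult_monom_leading[OF ex ex R_mult[OF r coef_in_R]] p(1) q(1) by blast
  have T: "coef (?T \<alpha> \<beta>) (p + q) = (if \<beta> = q then if \<alpha> = p then coef f p * w else 0 else 0)"
    if "\<alpha> \<in> supp (coef f)" "\<beta> \<in> supp (coef h)" for \<alpha> \<beta>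
  proof (cases "\<alpha> = p \<and> \<beta> = q")
    case True
    then show ?thesis
      using coef_has_leading_term[OF w(3) w(1) expvec_add[OF ex ex]] p(1) q(1)
      by (simp add: coef_mult_left[OF coef_in_R])
  next
    case False
    then have "deglex_less n (\<alpha> + \<beta>) (p + q)" using deglex_less_add_mono p(2) q(2) that by auto
    then have "deg (\<alpha> + \<beta>) \<le> deg (p + q)" "p + q \<noteq> \<alpha> + \<beta>"
      using deglex_less_degn deglex_less_irrefl by (blast, metis)
    then show ?thesis
      using coef_monom_mult_monom_above[OF ex ex R_mult[OF r coef_in_R] coef_in_R] that False by auto
  qed
  have "coef (f * r * h) (p + q) = coef f p * w"
    unfolding mult_mult_expansion[of f r h] coef_sum using T p(1) q(1) finite_supp_coef by simp
  then show thesis using that w by blast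
qed

lemma leading_coeffs_annihilate:
  assumes "f \<noteq> 0" "h \<noteq> 0" "\<And>r. r \<in> R \<Longrightarrow> f * r * h = 0"
  obtains \<alpha> \<beta> where "coef f \<alpha> \<noteq> 0" "coef h \<beta> \<noteq> 0" "\<And>r. r \<in> R \<Longrightarrow> coef f \<alpha> * r * coef h \<beta> = 0"
proof -
  have nonempty: "supp (coef a) \<noteq> {}" if "a \<noteq> 0" for a
    using that coef_inject[of a 0] coef_zero unfolding supp_def by auto
  obtain p where p: "p \<in> supp (coef f)" "\<And>\<alpha>. \<alpha> \<in> supp (coef f) \<Longrightarrow> \<alpha> \<noteq> p \<Longrightarrow> deglex_less n \<alpha> p"
    using deglex_max[OF finite_supp_coef nonempty[OF assms(1)]] expvec_coef unfolding supp_def by blast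
  obtain q where q: "q \<in> supp (coef h)" "\<And>\<beta>. \<beta> \<in> supp (coef h) \<Longrightarrow> \<beta> \<noteq> q \<Longrightarrow> deglex_less n \<beta> q"
    using deglex_max[OF finite_supp_coef nonempty[OF assms(2)]] expvec_coef unfolding supp_def by blast
  have "coef f p * r * coef h q = 0" if r: "r \<in> R" for r
  proof -
    obtain w where w: "\<And>a. a \<in> R \<Longrightarrow> a * w = 0 \<Longrightarrow> a * (r * coef h q) = 0"
      "coef (f * r * h) (p + q) = coef f p * w"
      using coef_mult_leading[OF p q r] by blast
    have "coef f p * w = 0" using w(2) assms(3)[OF r] by (simp add: coef_zero)
    then show ?thesis using w(1)[OF coef_in_R] by (simp add: mult.assoc)
  qed
  then show thesis using that p(1) q(1) unfolding supp_def by blast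
qed

lemma coeffs_annihilate_left_semicentral:
  assumes "left_semicentral R e" "coeffs_annihilate (f * e) (e * h)" "coeffs_annihilate f (h - e * h)"
  shows "coeffs_annihilate f h"
  unfolding coeffs_annihilate_def
proof (intro allI ballI)
  fix \<alpha> \<beta> r assume r: "r \<in> R"
  have e: "e \<in> R" "e * e = e" "r * e = e * r * e" using assms(1) r unfolding left_semicentral_def by auto
  have "coef f \<alpha> * r * coef h \<beta> = coef f \<alpha> * r * (coef h \<beta> - e * coef h \<beta>) + coef f \<alpha> * (r * e) * coef h \<beta>"
    by (simp add: algebra_simps)
  also have "coef f \<alpha> * (r * e) * coef h \<beta> = (coef f \<alpha> * e) * r * (e * coef h \<beta>)"
    unfolding e(3) by (simp add: mult.assoc)
  finally show "coef f \<alpha> * r * coef h \<beta> = 0"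
    using assms(2,3) r unfolding coeffs_annihilate_def
    by (simp add: coef_mult_idempotent[OF e(1,2)] coef_mult_left[OF e(1)] coef_diff)
qed

lemma coeffs_annihilate_right_semicentral:
  assumes "right_semicentral R e" "coeffs_annihilate (f - f * e) h" "coeffs_annihilate (f * e) (e * h)"
  shows "coeffs_annihilate f h"
  unfolding coeffs_annihilate_def
proof (intro allI ballI)
  fix \<alpha> \<beta> r assume r: "r \<in> R"
  have e: "e \<in> R" "e * e = e" "e * r = e * r * e" using assms(1) r unfolding right_semicentral_def by auto
  have "coef f \<alpha> * r * coef h \<beta> = (coef f \<alpha> - coef f \<alpha> * e) * r * coef h \<beta> + coef f \<alpha> * (e * r) * coef h \<beta>"
    by (simp add: algebra_simps)
  also have "coef f \<alpha> * (e * r) * coef h \<beta> = coef f \<alpha> * (e * r * e) * coef h \<beta>"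
    using e(3) by (rule arg_cong)
  also have "\<dots> = (coef f \<alpha> * e) * r * (e * coef h \<beta>)" by (simp add: mult.assoc)
  finally show "coef f \<alpha> * r * coef h \<beta> = 0"
    using assms(2,3) r unfolding coeffs_annihilate_def
    by (simp add: coef_mult_idempotent[OF e(1,2)] coef_mult_left[OF e(1)] coef_diff)
qed

lemma coeffs_annihilate_step_left_semicentral:
  assumes e: "left_semicentral R e" "coef f \<alpha>\<^sub>0 * e = 0" "e * coef h \<beta>\<^sub>0 = coef h \<beta>\<^sub>0"
    and nz: "coef f \<alpha>\<^sub>0 \<noteq> 0" "coef h \<beta>\<^sub>0 \<noteq> 0" and zero: "\<forall>t. f * t * h = 0"
    and IH: "\<And>f' h'. card (supp (coef f')) + card (supp (coef h')) < card (supp (coef f)) + card (supp (coef h)) \<Longrightarrow>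
      \<forall>t. f' * t * h' = 0 \<Longrightarrow> coeffs_annihilate f' h'"
  shows "coeffs_annihilate f h"
proof (rule coeffs_annihilate_left_semicentral[OF e(1)])
  have eR: "e \<in> R" "e * e = e" using e(1) unfolding left_semicentral_def by auto
  show "coeffs_annihilate (f * e) (e * h)"
  proof (rule IH)
    show "\<forall>t. f * e * t * (e * h) = 0"
    proof
      fix t
      have "f * e * t * (e * h) = f * (e * t * e) * h" by (simp add: mult.assoc)
      also have "\<dots> = f * (t * e) * h" by (simp only: left_semicentral_extend[OF e(1), symmetric])
      finally show "f * e * t * (e * h) = 0" using zero by simp
    qed
  next
    have "card (supp (coef (f * e))) < card (supp (coef f))"
      using card_supp_less[OF finite_supp_coef, of f "coef (f * e)" \<alpha>\<^sub>0] nz(1) e(2)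
      by (simp add: coef_mult_idempotent[OF eR])
    moreover have "card (supp (coef (e * h))) \<le> card (supp (coef h))"
      by (rule card_supp_le[OF finite_supp_coef]) (simp add: coef_mult_left[OF eR(1)])
    ultimately show "card (supp (coef (f * e))) + card (supp (coef (e * h))) <
        card (supp (coef f)) + card (supp (coef h))" by simp
  qed
  show "coeffs_annihilate f (h - e * h)"
  proof (rule IH)
    show "\<forall>t. f * t * (h - e * h) = 0"
    proof
      fix t
      have "f * t * (h - e * h) = f * t * h - f * (t * e) * h" by (simp add: algebra_simps)
      then show "f * t * (h - e * h) = 0" using zero by simp
    qed
  next
    have "card (supp (coef (h - e * h))) < card (supp (coef h))"
      using card_supp_less[OF finite_supp_coef, of h "coef (h - e * h)" \<beta>\<^sub>0] nz(2) e(3)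
      by (simp add: coef_diff coef_mult_left[OF eR(1)])
    then show "card (supp (coef f)) + card (supp (coef (h - e * h))) <
        card (supp (coef f)) + card (supp (coef h))" by simp
  qed
qed

lemma coeffs_annihilate_step_right_semicentral:
  assumes e: "right_semicentral R e" "coef f \<alpha>\<^sub>0 * e = coef f \<alpha>\<^sub>0" "e * coef h \<beta>\<^sub>0 = 0"
    and nz: "coef f \<alpha>\<^sub>0 \<noteq> 0" "coef h \<beta>\<^sub>0 \<noteq> 0" and zero: "\<forall>t. f * t * h = 0"
    and IH: "\<And>f' h'. card (supp (coef f')) + card (supp (coef h')) < card (supp (coef f)) + card (supp (coef h)) \<Longrightarrow>
      \<forall>t. f' * t * h' = 0 \<Longrightarrow> coeffs_annihilate f' h'"
  shows "coeffs_annihilate f h"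
proof (rule coeffs_annihilate_right_semicentral[OF e(1)])
  have eR: "e \<in> R" "e * e = e" using e(1) unfolding right_semicentral_def by auto
  show "coeffs_annihilate (f - f * e) h"
  proof (rule IH)
    show "\<forall>t. (f - f * e) * t * h = 0"
    proof
      fix t
      have "(f - f * e) * t * h = f * t * h - f * (e * t) * h" by (simp add: algebra_simps)
      then show "(f - f * e) * t * h = 0" using zero by simp
    qed
  next
    have "card (supp (coef (f - f * e))) < card (supp (coef f))"
      using card_supp_less[OF finite_supp_coef, of f "coef (f - f * e)" \<alpha>\<^sub>0] nz(1) e(2)
      by (simp add: coef_diff coef_mult_idempotent[OF eR])
    then show "card (supp (coef (f - f * e))) + card (supp (coef h)) <
        card (supp (coef f)) + card (supp (coef h))" by simp
  qed
  show "coeffs_annihilate (f * e) (e * h)"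
  proof (rule IH)
    show "\<forall>t. f * e * t * (e * h) = 0"
    proof
      fix t
      have "f * e * t * (e * h) = f * (e * t * e) * h" by (simp add: mult.assoc)
      also have "\<dots> = f * (e * t) * h" by (simp only: right_semicentral_extend[OF e(1), symmetric])
      finally show "f * e * t * (e * h) = 0" using zero by simp
    qed
  next
    have "card (supp (coef (f * e))) \<le> card (supp (coef f))"
      by (rule card_supp_le[OF finite_supp_coef]) (simp add: coef_mult_idempotent[OF eR])
    moreover have "card (supp (coef (e * h))) < card (supp (coef h))"
      using card_supp_less[OF finite_supp_coef, of h "coef (e * h)" \<beta>\<^sub>0] nz(2) e(3)
      by (simp add: coef_mult_left[OF eR(1)])
    ultimately show "card (supp (coef (f * e))) + card (supp (coef (e * h))) <
        card (supp (coef f)) + card (supp (coef h))" by simp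
  qed
qed

text \<open>Induction on the total number of nonzero coefficients of \<open>f\<close> and \<open>h\<close>: an idempotent that
  separates the two leading coefficients splits the problem into two smaller ones.\<close>

lemma mult_eq_0_iff_coeffs_annihilate:
  assumes split: "\<And>a b. a \<in> R \<Longrightarrow> b \<in> R \<Longrightarrow> \<forall>r\<in>R. a * r * b = 0 \<Longrightarrow>
      (\<exists>e. left_semicentral R e \<and> a * e = 0 \<and> e * b = b) \<or>
      (\<exists>e. right_semicentral R e \<and> a * e = a \<and> e * b = 0)"
  shows "(\<forall>t. f * t * h = 0) \<longleftrightarrow> coeffs_annihilate f h"
proof
  show "coeffs_annihilate f h \<Longrightarrow> \<forall>t. f * t * h = 0" using coeffs_annihilate_imp_mult_eq_0 by blast
  show "\<forall>t. f * t * h = 0 \<Longrightarrow> coeffs_annihilate f h"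
  proof (induction "card (supp (coef f)) + card (supp (coef h))" arbitrary: f h rule: less_induct)
    case less
    show ?case
    proof (cases "f = 0 \<or> h = 0")
      case True
      then show ?thesis unfolding coeffs_annihilate_def by (auto simp: coef_zero)
    next
      case False
      then obtain \<alpha>\<^sub>0 \<beta>\<^sub>0 where nz: "coef f \<alpha>\<^sub>0 \<noteq> 0" "coef h \<beta>\<^sub>0 \<noteq> 0"
        and ann: "\<forall>r\<in>R. coef f \<alpha>\<^sub>0 * r * coef h \<beta>\<^sub>0 = 0"
        using leading_coeffs_annihilate less.prems by metis
      from split[OF coef_in_R coef_in_R ann] show ?thesis
        using coeffs_annihilate_step_left_semicentral[OF _ _ _ nz less.prems less.hyps]
          coeffs_annihilate_step_right_semicentral[OF _ _ _ nz less.prems less.hyps]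
        by blast
    qed
  qed
qed
end

section \<open>Property (a.c.)\<close>

lemma r_ann_fg_right_ideal:
  "r_ann UNIV {y. \<exists>t. y = (\<Sum>k<(m::nat). g k * t k)} = {h :: 'a::ring_1. \<forall>k<m. \<forall>t. g k * t * h = 0}"
proof (intro set_eqI iffI)
  fix h :: 'a assume h: "h \<in> r_ann UNIV {y. \<exists>t. y = (\<Sum>k<m. g k * t k)}"
  have "g k * t * h = 0" if "k < m" for k t
  proof -
    have "(\<Sum>j<m. g j * (if j = k then t else 0)) = (\<Sum>j<m. if j = k then g j * t else 0)"
      by (rule sum.cong) simp_all
    then have "g k * t = (\<Sum>j<m. g j * (if j = k then t else 0))" using that by simp
    then have "g k * t \<in> {y. \<exists>t. y = (\<Sum>k<m. g k * t k)}"
      by (auto intro!: exI[of _ "\<lambda>j. if j = k then t else 0"])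
    then show ?thesis using h unfolding r_ann_def by blast
  qed
  then show "h \<in> {h. \<forall>k<m. \<forall>t. g k * t * h = 0}" by blast
next
  fix h :: 'a assume "h \<in> {h. \<forall>k<m. \<forall>t. g k * t * h = 0}"
  then show "h \<in> r_ann UNIV {y. \<exists>t. y = (\<Sum>k<m. g k * t k)}"
    unfolding r_ann_def by (auto simp: sum_distrib_right)
qed

lemma l_ann_fg_left_ideal:
  "l_ann UNIV {y. \<exists>t. y = (\<Sum>k<(m::nat). t k * g k)} = {h :: 'a::ring_1. \<forall>k<m. \<forall>t. h * t * g k = 0}"
proof (intro set_eqI iffI)
  fix h :: 'a assume h: "h \<in> l_ann UNIV {y. \<exists>t. y = (\<Sum>k<m. t k * g k)}"
  have "h * t * g k = 0" if "k < m" for k t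
  proof -
    have "(\<Sum>j<m. (if j = k then t else 0) * g j) = (\<Sum>j<m. if j = k then t * g j else 0)"
      by (rule sum.cong) simp_all
    then have "t * g k = (\<Sum>j<m. (if j = k then t else 0) * g j)" using that by simp
    then have "t * g k \<in> {y. \<exists>t. y = (\<Sum>k<m. t k * g k)}"
      by (auto intro!: exI[of _ "\<lambda>j. if j = k then t else 0"])
    then show ?thesis using h unfolding l_ann_def by (auto simp: mult.assoc)
  qed
  then show "h \<in> {h. \<forall>k<m. \<forall>t. h * t * g k = 0}" by blast
next
  fix h :: 'a assume "h \<in> {h. \<forall>k<m. \<forall>t. h * t * g k = 0}"
  then show "h \<in> l_ann UNIV {y. \<exists>t. y = (\<Sum>k<m. t k * g k)}"
    unfolding l_ann_def by (auto simp: sum_distrib_left mult.assoc[symmetric])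
qed

context compatible_skew_PBW
begin

lemma ac_right_if_coeffs_annihilate:
  assumes "right_pq_Baer R" and qA: "\<And>f h. (\<forall>t. f * t * h = 0) \<longleftrightarrow> coeffs_annihilate f h"
  shows "ac_right TYPE('a)"
  unfolding ac_right_def fg_right_ideal_def
proof (intro allI impI, elim exE)
  fix I :: "'a set" and m :: nat and g assume I: "I = {y. \<exists>t. y = (\<Sum>k<m. g k * t k)}"
  define E where "E = (\<Union>k<m. range (coef (g k)))"
  have "finite E" "E \<subseteq> R" unfolding E_def using finite_range_coef coef_in_R by blast+
  then obtain c where c: "c \<in> R" "\<And>b. b \<in> R \<Longrightarrow> (\<forall>r\<in>R. c * r * b = 0) \<longleftrightarrow> (\<forall>a\<in>E. \<forall>r\<in>R. a * r * b = 0)"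
    using right_pq_Baer_finite_annihilator[OF subring_R assms(1)] by blast
  have "(\<forall>k<m. \<forall>t. g k * t * h = 0) \<longleftrightarrow> (\<forall>t. c * t * h = 0)" for h
  proof -
    have "(\<forall>k<m. \<forall>t. g k * t * h = 0) \<longleftrightarrow> (\<forall>\<beta>. \<forall>a\<in>E. \<forall>r\<in>R. a * r * coef h \<beta> = 0)"
      unfolding qA coeffs_annihilate_def E_def by blast
    also have "\<dots> \<longleftrightarrow> coeffs_annihilate c h"
      using c coef_in_R coeffs_annihilate_const_left[OF c(1)] by simp
    finally show ?thesis unfolding qA .
  qed
  then have "r_ann UNIV I = r_ann UNIV (range (\<lambda>t. c * t))"
    unfolding I r_ann_fg_right_ideal by (auto simp: r_ann_def)
  then show "\<exists>c. r_ann UNIV I = r_ann UNIV (range (\<lambda>t. c * t))" by blast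
qed

lemma ac_left_if_coeffs_annihilate:
  assumes "left_pq_Baer R" and qA: "\<And>f h. (\<forall>t. f * t * h = 0) \<longleftrightarrow> coeffs_annihilate f h"
  shows "ac_left TYPE('a)"
  unfolding ac_left_def fg_left_ideal_def
proof (intro allI impI, elim exE)
  fix I :: "'a set" and m :: nat and g assume I: "I = {y. \<exists>t. y = (\<Sum>k<m. t k * g k)}"
  define E where "E = (\<Union>k<m. range (coef (g k)))"
  have "finite E" "E \<subseteq> R" unfolding E_def using finite_range_coef coef_in_R by blast+
  then obtain c where c: "c \<in> R" "\<And>b. b \<in> R \<Longrightarrow> (\<forall>r\<in>R. b * r * c = 0) \<longleftrightarrow> (\<forall>a\<in>E. \<forall>r\<in>R. b * r * a = 0)"
    using left_pq_Baer_finite_annihilator[OF subring_R assms(1)] by blast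
  have "(\<forall>k<m. \<forall>t. h * t * g k = 0) \<longleftrightarrow> (\<forall>t. h * t * c = 0)" for h
  proof -
    have "(\<forall>k<m. \<forall>t. h * t * g k = 0) \<longleftrightarrow> (\<forall>\<beta>. \<forall>a\<in>E. \<forall>r\<in>R. coef h \<beta> * r * a = 0)"
      unfolding qA coeffs_annihilate_def E_def by blast
    also have "\<dots> \<longleftrightarrow> coeffs_annihilate h c"
      using c coef_in_R coeffs_annihilate_const_right[OF c(1)] by simp
    finally show ?thesis unfolding qA .
  qed
  then have "l_ann UNIV I = l_ann UNIV (range (\<lambda>t. t * c))"
    unfolding I l_ann_fg_left_ideal by (auto simp: l_ann_def mult.assoc)
  then show "\<exists>c. l_ann UNIV I = l_ann UNIV (range (\<lambda>t. t * c))" by blast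
qed

end

theorem mainTheorem4:
  fixes R :: "'a::ring_1 set" and x :: "nat \<Rightarrow> 'a" and n :: nat
    and \<sigma> \<delta> :: "nat \<Rightarrow> 'a \<Rightarrow> 'a"
  assumes "bijective_skew_PBW R x n \<sigma>"
    and "assoc_families R x n \<sigma> \<delta>"
    and "Sigma_compatible R n \<sigma>"
    and "Delta_compatible R n \<delta>"
  shows "(right_pq_Baer R \<longrightarrow> ac_right TYPE('a)) \<and>
         (left_pq_Baer R \<longrightarrow> ac_left TYPE('a))"
proof -
  interpret compatible_skew_PBW R x n \<sigma> \<delta> using assms by unfold_locales
  have "ac_right TYPE('a)" if "right_pq_Baer R"
  proof (rule ac_right_if_coeffs_annihilate[OF that mult_eq_0_iff_coeffs_annihilate])
    fix a b assume "a \<in> R" "b \<in> R" "\<forall>r\<in>R. a * r * b = 0"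
    then show "(\<exists>e. left_semicentral R e \<and> a * e = 0 \<and> e * b = b) \<or>
        (\<exists>e. right_semicentral R e \<and> a * e = a \<and> e * b = 0)"
      using right_pq_Baer_annihilator_split[OF subring_R that] by blast
  qed
  moreover have "ac_left TYPE('a)" if "left_pq_Baer R"
  proof (rule ac_left_if_coeffs_annihilate[OF that mult_eq_0_iff_coeffs_annihilate])
    fix a b assume "a \<in> R" "b \<in> R" "\<forall>r\<in>R. a * r * b = 0"
    then show "(\<exists>e. left_semicentral R e \<and> a * e = 0 \<and> e * b = b) \<or>
        (\<exists>e. right_semicentral R e \<and> a * e = a \<and> e * b = 0)"
      using left_pq_Baer_annihilator_split[OF subring_R that] by blast
  qed
  ultimately show ?thesis by blast
qed

end
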